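(* Let $g\in\mathcal{H}(\mathbb{D})$ and $\beta,\gamma>0$. Let $T_gf(z)=\int_0^z f(w)g'(w)\,dw$, $C_gf(z)=\frac1z\int_0^z f(w)g'(w)\,dw$ for $z\neq0$, $C_gf(0)=0$, and $M_{g'}f=g'f$. (a) The following are equivalent: (i) $C_g:H_\gamma\to H_\beta$ is bounded; (ii) $T_g:H_\gamma\to H_\beta$ is bounded; (iii) $M_{g'}:H_\gamma\to H_{\beta+1}$ is bounded; (iv) $\sup_{z\in\mathbb{D}}(1-|z|^2)^{\beta+1-\gamma}|g'(z)|<\infty$. When $\gamma=\beta$, (iv) is equivalent to $g\in\mathcal{B}$, the Bloch space $\mathcal{B}_1$. (b) Let $\delta_z$ denote the point evaluation functional $f\mapsto f(z)$ on $\mathcal{B}_\gamma$. The following are equivalent: (i) $C_g:\mathcal{B}_\gamma\to\mathcal{B}_\beta$ is bounded; (ii) $T_g:\mathcal{B}_\gamma\to\mathcal{B}_\beta$ is bounded; (iii) $M_{g'}:\mathcal{B}_\gamma\to H_\beta$ is bounded; (iv) $\sup_{z\in\mathbb{D}}(1-|z|^2)^\beta\|\delta_z\|\,|g'(z)|<\infty$. In particular, when $\gamma=\beta$, (iv) is equivalent to $g\in\mathcal{B}_\beta$ if $0<\beta<1$, to $g\in\mathrm{Log}\mathcal{B}$ if $\beta=1$, and to $g\in\mathcal{B}$ if $\beta>1$.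
   Context: $\mathbb{D}$ is the unit disk, $\mathcal{H}(\mathbb{D})$ its holomorphic functions. For $\gamma>0$, $H_\gamma=\{f\in\mathcal{H}(\mathbb{D}):\sup_z(1-|z|^2)^\gamma|f(z)|<\infty\}$ with that supremum as norm, and $\mathcal{B}_\gamma=\{f\in\mathcal{H}(\mathbb{D}):\sup_z(1-|z|^2)^\gamma|f'(z)|<\infty\}$ with norm $|f(0)|+\sup_z(1-|z|^2)^\gamma|f'(z)|$; $\mathcal{B}=\mathcal{B}_1$ is the Bloch space. $\mathrm{Log}\mathcal{B}$ is the set of $f\in\mathcal{H}(\mathbb{D})$ with $\sup_z(1-|z|^2)\log\frac{1}{1-|z|^2}|f'(z)|<\infty$. *)

theory Defs
  imports "HOL-Complex_Analysis.Complex_Analysis"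
begin

definition growth_space :: "real \<Rightarrow> (complex \<Rightarrow> complex) set" where
  "growth_space \<gamma> = {f. f holomorphic_on ball 0 1 \<and>
     (\<exists>C. \<forall>z\<in>ball 0 1. (1 - (cmod z)^2) powr \<gamma> * cmod (f z) \<le> C)}"

definition growth_norm :: "real \<Rightarrow> (complex \<Rightarrow> complex) \<Rightarrow> real" where
  "growth_norm \<gamma> f = (SUP z\<in>ball 0 1. (1 - (cmod z)^2) powr \<gamma> * cmod (f z))"

definition bloch_type :: "real \<Rightarrow> (complex \<Rightarrow> complex) set" where
  "bloch_type \<gamma> = {f. f holomorphic_on ball 0 1 \<and>
     (\<exists>C. \<forall>z\<in>ball 0 1. (1 - (cmod z)^2) powr \<gamma> * cmod (deriv f z) \<le> C)}"

definition bloch_norm :: "real \<Rightarrow> (complex \<Rightarrow> complex) \<Rightarrow> real" where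
  "bloch_norm \<gamma> f = cmod (f 0) + (SUP z\<in>ball 0 1. (1 - (cmod z)^2) powr \<gamma> * cmod (deriv f z))"

definition bloch :: "(complex \<Rightarrow> complex) set" where
  "bloch = bloch_type 1"

definition log_bloch :: "(complex \<Rightarrow> complex) set" where
  "log_bloch = {f. f holomorphic_on ball 0 1 \<and>
     (\<exists>C. \<forall>z\<in>ball 0 1. (1 - (cmod z)^2) * ln (1 / (1 - (cmod z)^2)) * cmod (deriv f z) \<le> C)}"

definition point_eval_norm :: "real \<Rightarrow> complex \<Rightarrow> real" where
  "point_eval_norm \<gamma> z = (SUP f\<in>{f \<in> bloch_type \<gamma>. bloch_norm \<gamma> f \<le> 1}. cmod (f z))"

definition bounded_op ::
  "('a set) \<Rightarrow> ('a \<Rightarrow> real) \<Rightarrow> ('b set) \<Rightarrow> ('b \<Rightarrow> real) \<Rightarrow> ('a \<Rightarrow> 'b) \<Rightarrow> bool" where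
  "bounded_op X nX Y nY T \<longleftrightarrow> (\<forall>f\<in>X. T f \<in> Y) \<and> (\<exists>C. \<forall>f\<in>X. nY (T f) \<le> C * nX f)"

definition T_op :: "(complex \<Rightarrow> complex) \<Rightarrow> (complex \<Rightarrow> complex) \<Rightarrow> complex \<Rightarrow> complex" where
  "T_op g f z = contour_integral (linepath 0 z) (\<lambda>w. f w * deriv g w)"

definition C_op :: "(complex \<Rightarrow> complex) \<Rightarrow> (complex \<Rightarrow> complex) \<Rightarrow> complex \<Rightarrow> complex" where
  "C_op g f z = (if z = 0 then f 0 * deriv g 0 else T_op g f z / z)"

definition M_op :: "(complex \<Rightarrow> complex) \<Rightarrow> (complex \<Rightarrow> complex) \<Rightarrow> complex \<Rightarrow> complex" where
  "M_op g f z = deriv g z * f z"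

end

theory Submission
  imports Defs
begin

(*
  Since T_g f vanishes at 0 with (T_g f)' = g' f = M_g' f, part (b)(ii)<->(iii) is immediate.  For
  (a)(ii)<->(iii): Cauchy's estimate on the disc of radius (1 - |z|)/2 shows that differentiation maps
  H_beta into H_(beta+1), and for beta > 0 integration along the radius [0, z] gives the converse for
  functions vanishing at 0.  C_g f = T_g f / z is comparable to T_g f for |z| >= 1/2; near the origin it
  is a difference quotient of T_g f and is bounded through (T_g f)'.

  M_g' : H_gamma -> H_(beta+1) is bounded iff (1-|z|^2)^(beta+1-gamma) |g'(z)| is bounded, as one sees
  by testing on the normalised kernels (1-|a|^2)^(m-gamma) / (1 - conj a w)^m, which are uniformly
  bounded in H_gamma; on B_gamma the estimate |f z| <= ||delta_z|| ||f|| is sharp by definition.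
  Finally ||delta_z|| on B_beta is comparable to 1, 1 + log (1/(1-|z|^2)) and (1-|z|^2)^(1-beta)
  for beta < 1, = 1, > 1 respectively: upper bounds by radial integration, lower bounds by evaluating
  -log (1 - conj a w) and (1-|a|^2)^(m+1-beta) / (1 - conj a w)^m at a.
*)

abbreviation weight :: "complex \<Rightarrow> real" where "weight z \<equiv> 1 - (cmod z)^2"

lemma weight_pos: "z \<in> ball 0 1 \<Longrightarrow> 0 < weight z"
proof -
  assume "z \<in> ball 0 1" then have "cmod z < 1" by simp
  then have "(cmod z)^2 < 1" by (simp add: abs_square_less_1)
  then show ?thesis by simp
qed

lemma one_minus_norm_le_weight: "z \<in> ball 0 1 \<Longrightarrow> 1 - cmod z \<le> weight z"
proof -
  assume "z \<in> ball 0 1" then have "cmod z < 1" by simp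
  then have "(cmod z)^2 \<le> cmod z" by (simp add: power2_eq_square mult_le_cancel_left1 less_imp_le mult_left_le_one_le)
  then show ?thesis by simp
qed

lemma weight_le_two_one_minus_norm: "z \<in> ball 0 1 \<Longrightarrow> weight z \<le> 2 * (1 - cmod z)"
proof -
  assume "z \<in> ball 0 1" then have "cmod z < 1" by simp
  have "weight z = (1 - cmod z) * (1 + cmod z)" by (simp add: power2_eq_square algebra_simps)
  also have "\<dots> \<le> (1 - cmod z) * 2" using \<open>cmod z < 1\<close> by (intro mult_left_mono) auto
  finally show ?thesis by simp
qed

lemma weight_antimono: "cmod u \<le> cmod z \<Longrightarrow> weight z \<le> weight u"
  by (simp add: power_mono)

lemma weight_powr_le_near_origin:
  assumes "cmod z < 1/2"
  shows "weight z powr a \<le> 2 * weight z powr (a + 1)"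
proof -
  have "cmod z ^ 2 \<le> (1/2) ^ 2" using assms by (intro power_mono) auto
  then have w: "1/2 \<le> weight z" by (simp add: power2_eq_square)
  then have "weight z powr a \<le> 2 * weight z * weight z powr a" by (simp add: mult_le_cancel_right1)
  also have "\<dots> = 2 * weight z powr (a + 1)" using w by (simp add: powr_add)
  finally show ?thesis .
qed

lemma weighted_bound_nonneg: "(\<And>u. u \<in> ball 0 1 \<Longrightarrow> weight u powr a * cmod (F u) \<le> K) \<Longrightarrow>
    0 \<le> K"
proof -
  assume "\<And>u. u \<in> ball 0 1 \<Longrightarrow> weight u powr a * cmod (F u) \<le> K"
  from this[of 0] have "cmod (F 0) \<le> K" by simp
  then show ?thesis by (rule order_trans[OF norm_ge_zero])
qed

lemma norm_le_weighted_bound: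
  assumes u: "u \<in> ball 0 1" and K: "\<And>u. u \<in> ball 0 1 \<Longrightarrow> weight u powr a * cmod (F u) \<le> K"
    and a: "a \<ge> 0" and t: "0 < t" "t \<le> weight u"
  shows "cmod (F u) \<le> K / t powr a"
proof -
  have K0: "0 \<le> K" by (rule weighted_bound_nonneg[OF K])
  have pu: "0 < weight u powr a" using weight_pos[OF u] by simp
  have pt: "0 < t powr a" using t by simp
  have "cmod (F u) \<le> K / weight u powr a" using K[OF u] pu by (simp add: field_simps mult.commute)
  also have "\<dots> \<le> K / t powr a"
    using powr_mono2[OF a less_imp_le[OF t(1)] t(2)] mult_pos_pos[OF pu pt] K0
    by (intro divide_left_mono) auto
  finally show ?thesis .
qed

lemma growth_space_bdd_above: "f \<in> growth_space \<gamma> \<Longrightarrow>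
    bdd_above ((\<lambda>z. weight z powr \<gamma> * cmod (f z)) ` ball 0 1)"
  unfolding growth_space_def by (auto intro: bdd_aboveI2)

lemma growth_norm_upper: "f \<in> growth_space \<gamma> \<Longrightarrow> z \<in> ball 0 1 \<Longrightarrow>
    weight z powr \<gamma> * cmod (f z) \<le> growth_norm \<gamma> f"
  unfolding growth_norm_def by (rule cSUP_upper[OF _ growth_space_bdd_above])

lemma growth_norm_least: "(\<And>z. z \<in> ball 0 1 \<Longrightarrow> weight z powr \<gamma> * cmod (f z) \<le> B) \<Longrightarrow>
    growth_norm \<gamma> f \<le> B"
  unfolding growth_norm_def by (rule cSUP_least) auto

lemma growth_norm_nonneg: "f \<in> growth_space \<gamma> \<Longrightarrow> 0 \<le> growth_norm \<gamma> f"
  using growth_norm_upper[of f \<gamma> 0] by (simp add: order_trans[OF norm_ge_zero])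

lemma growth_spaceI: "f holomorphic_on ball 0 1 \<Longrightarrow> (\<And>z. z \<in> ball 0 1 \<Longrightarrow> weight z powr \<gamma> * cmod (f z) \<le> B) \<Longrightarrow>
    f \<in> growth_space \<gamma>"
  unfolding growth_space_def by blast

lemma growth_space_holomorphic: "f \<in> growth_space \<gamma> \<Longrightarrow> f holomorphic_on ball 0 1"
  unfolding growth_space_def by blast

lemma bloch_type_bdd_above: "f \<in> bloch_type \<gamma> \<Longrightarrow>
    bdd_above ((\<lambda>z. weight z powr \<gamma> * cmod (deriv f z)) ` ball 0 1)"
  unfolding bloch_type_def by (auto intro: bdd_aboveI2)

lemma bloch_norm_upper: "f \<in> bloch_type \<gamma> \<Longrightarrow> z \<in> ball 0 1 \<Longrightarrow>
    weight z powr \<gamma> * cmod (deriv f z) \<le> bloch_norm \<gamma> f - cmod (f 0)"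
  unfolding bloch_norm_def using cSUP_upper[OF _ bloch_type_bdd_above] by simp

lemma bloch_norm_least: "(\<And>z. z \<in> ball 0 1 \<Longrightarrow> weight z powr \<gamma> * cmod (deriv f z) \<le> B) \<Longrightarrow>
    bloch_norm \<gamma> f \<le> cmod (f 0) + B"
  unfolding bloch_norm_def by (rule add_left_mono, rule cSUP_least) auto

lemma norm_0_le_bloch_norm: "f \<in> bloch_type \<gamma> \<Longrightarrow> cmod (f 0) \<le> bloch_norm \<gamma> f"
proof -
  assume a: "f \<in> bloch_type \<gamma>"
  have "0 \<le> weight 0 powr \<gamma> * cmod (deriv f 0)" by simp
  also have "\<dots> \<le> bloch_norm \<gamma> f - cmod (f 0)" by (rule bloch_norm_upper[OF a]) simp
  finally show ?thesis by simp
qed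

lemma bloch_norm_nonneg: "f \<in> bloch_type \<gamma> \<Longrightarrow> 0 \<le> bloch_norm \<gamma> f"
  using norm_0_le_bloch_norm[of f \<gamma>] norm_ge_zero order_trans by blast

lemma bloch_typeI: "f holomorphic_on ball 0 1 \<Longrightarrow> (\<And>z. z \<in> ball 0 1 \<Longrightarrow> weight z powr \<gamma> * cmod (deriv f z) \<le> B) \<Longrightarrow>
    f \<in> bloch_type \<gamma>"
  unfolding bloch_type_def by blast

lemma bloch_type_holomorphic: "f \<in> bloch_type \<gamma> \<Longrightarrow> f holomorphic_on ball 0 1"
  unfolding bloch_type_def by blast

lemma has_field_derivative_T_op:
  assumes hf: "f holomorphic_on ball 0 1" and hg: "g holomorphic_on ball 0 1" and z: "z \<in> ball 0 1"
  shows "(T_op g f has_field_derivative f z * deriv g z) (at z)"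
proof -
  let ?S = "ball (0::complex) 1"
  let ?F = "\<lambda>w. f w * deriv g w"
  have holF: "?F holomorphic_on ?S"
    using hf hg by (intro holomorphic_intros holomorphic_deriv) auto
  have contf: "continuous_on ?S ?F" using holF holomorphic_on_imp_continuous_on by blast
  have a_cs: "closed_segment 0 x \<subseteq> ?S" if "x \<in> ?S" for x
    using that convex_ball[of "0::complex" 1] by (simp add: convex_contains_segment)
  { fix x b c
    assume "x \<in> ?S" "closed_segment b c \<subseteq> ?S"
    then have "b \<in> ?S" "c \<in> ?S" by auto
    then have abcs: "convex hull {0, b, c} \<subseteq> ?S"
      by (intro hull_minimal) (auto simp: convex_ball)
    then have "continuous_on (convex hull {0, b, c}) ?F"
      by (simp add: continuous_on_subset [OF contf])
    moreover have "?F field_differentiable at x" if "x \<in> interior (convex hull {0, b, c}) - {}" for x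
      using that abcs holF interior_subset
      by (meson Diff_iff holomorphic_on_imp_differentiable_at open_ball subsetD)
    ultimately have "(?F has_contour_integral 0) (linepath 0 b +++ linepath b c +++ linepath c 0)"
      by (intro Cauchy_theorem_triangle_cofinite[where S="{}"]) auto
  } note triangle = this
  have "((\<lambda>x. contour_integral (linepath 0 x) ?F) has_field_derivative ?F z) (at z)"
  proof (rule triangle_contour_integrals_starlike_primitive[where S="?S"])
    fix b c assume "closed_segment b c \<subseteq> ?S"
    from triangle[OF z this] show "contour_integral (linepath 0 b) ?F + contour_integral (linepath b c) ?F +
        contour_integral (linepath c 0) ?F = 0"
      by (rule has_chain_integral_chain_integral3)
  qed (use contf a_cs z in auto)
  then show ?thesis unfolding T_op_def[abs_def] .
qed

lemma holomorphic_T_op: "f holomorphic_on ball 0 1 \<Longrightarrow> g holomorphic_on ball 0 1 \<Longrightarrow>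
    T_op g f holomorphic_on ball 0 1"
  using has_field_derivative_T_op holomorphic_on_open open_ball by blast

lemma T_op_0: "T_op g f 0 = 0" by (simp add: T_op_def)

lemma holomorphic_M_op: "f holomorphic_on ball 0 1 \<Longrightarrow> g holomorphic_on ball 0 1 \<Longrightarrow>
    M_op g f holomorphic_on ball 0 1"
  unfolding M_op_def[abs_def] by (intro holomorphic_intros holomorphic_deriv) auto

lemma deriv_T_op: "f holomorphic_on ball 0 1 \<Longrightarrow> g holomorphic_on ball 0 1 \<Longrightarrow> z \<in> ball 0 1 \<Longrightarrow>
   deriv (T_op g f) z = M_op g f z"
  unfolding M_op_def using has_field_derivative_T_op DERIV_imp_deriv by (metis mult.commute)

lemma C_op_eq_difference_quotient: "f holomorphic_on ball 0 1 \<Longrightarrow> g holomorphic_on ball 0 1 \<Longrightarrow>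
  C_op g f = (\<lambda>z. if z = 0 then deriv (T_op g f) 0 else (T_op g f z - T_op g f 0) / (z - 0))"
  by (rule ext) (simp add: C_op_def M_op_def T_op_0 deriv_T_op mult.commute)

lemma holomorphic_C_op: "f holomorphic_on ball 0 1 \<Longrightarrow> g holomorphic_on ball 0 1 \<Longrightarrow>
    C_op g f holomorphic_on ball 0 1"
  using C_op_eq_difference_quotient pole_lemma_open[OF holomorphic_T_op open_ball] by metis

lemma T_op_eq_mult_C_op: "T_op g f z = z * C_op g f z"
  by (simp add: C_op_def T_op_0)

lemma deriv_T_op_eq_C_op:
  assumes hf: "f holomorphic_on ball 0 1" and hg: "g holomorphic_on ball 0 1" and z: "z \<in> ball 0 1"
  shows "deriv (T_op g f) z = C_op g f z + z * deriv (C_op g f) z"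
proof -
  have "(C_op g f has_field_derivative deriv (C_op g f) z) (at z)"
    using holomorphic_C_op[OF hf hg] z by (meson DERIV_deriv_iff_field_differentiable holomorphic_on_imp_differentiable_at open_ball)
  then have "((\<lambda>z. z * C_op g f z) has_field_derivative C_op g f z + z * deriv (C_op g f) z) (at z)"
    by (auto intro!: derivative_eq_intros)
  then have "(T_op g f has_field_derivative C_op g f z + z * deriv (C_op g f) z) (at z)"
    by (simp add: T_op_eq_mult_C_op[symmetric])
  then show ?thesis by (rule DERIV_imp_deriv)
qed

lemma weighted_diff_le_norm:
  assumes hh: "h holomorphic_on ball 0 1" and z: "z \<in> ball 0 1" and a: "a \<ge> 0"
    and K: "\<And>u. u \<in> ball 0 1 \<Longrightarrow> weight u powr a * cmod (deriv h u) \<le> K"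
  shows "weight z powr a * cmod (h z - h 0) \<le> K * cmod z"
proof -
  have wz: "0 < weight z" using weight_pos[OF z] .
  have seg: "closed_segment 0 z \<subseteq> ball 0 1"
    using z convex_ball[of "0::complex" 1] by (simp add: convex_contains_segment)
  have "cmod (h z - h 0) \<le> (K / weight z powr a) * cmod (z - 0)"
  proof (rule field_differentiable_bound[where S="closed_segment 0 z" and f'="deriv h"])
    show "convex (closed_segment 0 z)" by simp
    fix u assume u: "u \<in> closed_segment 0 z"
    then have ub: "u \<in> ball 0 1" using seg by blast
    show "(h has_field_derivative deriv h u) (at u within closed_segment 0 z)"
      using hh ub by (meson DERIV_deriv_iff_field_differentiable has_field_derivative_at_within holomorphic_on_imp_differentiable_at open_ball)
    show "cmod (deriv h u) \<le> K / weight z powr a"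
      using norm_le_weighted_bound[OF ub K a wz] weight_antimono segment_bound(1)[OF u] by simp
  qed (auto)
  then show ?thesis using wz by (simp add: field_simps mult.commute)
qed

lemma has_real_derivative_Re_along_ray:
  assumes hh: "h holomorphic_on ball 0 1" and sz: "of_real s * z \<in> ball 0 1"
  shows "((\<lambda>s. Re (c * h (of_real s * z))) has_real_derivative Re (z * (c * deriv h (of_real s * z)))) (at s)"
proof -
  have "(h has_field_derivative deriv h (of_real s * z)) (at (of_real s * z))"
    using hh sz by (meson DERIV_deriv_iff_field_differentiable holomorphic_on_imp_differentiable_at open_ball)
  then have d1: "((\<lambda>w. c * h w) has_field_derivative c * deriv h (of_real s * z)) (at (of_real s * z))"
    by (rule DERIV_cmult)
  have "((\<lambda>x::real. x) has_field_derivative 1) (at s)" by simp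
  from has_vector_derivative_mult_left[OF has_vector_derivative_of_real[OF this], of z]
  have d2: "((\<lambda>s. of_real s * z) has_vector_derivative z) (at s)" by simp
  have "(((\<lambda>w. c * h w) \<circ> (\<lambda>s. of_real s * z)) has_vector_derivative (z * (c * deriv h (of_real s * z)))) (at s)"
    by (rule field_vector_diff_chain_at[OF d2 d1])
  then show ?thesis by (auto dest: has_field_derivative_Re simp: o_def)
qed

lemma norm_diff_le_radial_majorant:
  assumes hh: "h holomorphic_on ball 0 1" and z: "z \<in> ball 0 1"
    and G: "\<And>s. 0 \<le> s \<Longrightarrow> s \<le> 1 \<Longrightarrow> (G has_real_derivative G' s) (at s)"
    and B: "\<And>s. 0 \<le> s \<Longrightarrow> s \<le> 1 \<Longrightarrow> cmod z * cmod (deriv h (of_real s * z)) \<le> G' s"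
  shows "cmod (h z - h 0) \<le> G 1 - G 0"
proof -
  have sb: "of_real s * z \<in> ball 0 1" if "0 \<le> s" "s \<le> 1" for s
  proof -
    have "cmod (of_real s * z) = s * cmod z" using that by (simp add: norm_mult)
    also have "\<dots> \<le> cmod z" using that by (simp add: mult_left_le_one_le)
    finally show ?thesis using z by simp
  qed
  \<comment> \<open>Projecting onto the direction of \<open>h z - h 0\<close> reduces the estimate to real monotonicity.\<close>
  define c where "c = cnj (h z - h 0)"
  have hd: "((\<lambda>s. Re (c * h (of_real s * z))) has_real_derivative Re (z * (c * deriv h (of_real s * z)))) (at s)"
    if "0 \<le> s" "s \<le> 1" for s :: real
    by (rule has_real_derivative_Re_along_ray[OF hh sb[OF that]])
  have Gp: "0 \<le> G' s" if "0 \<le> s" "s \<le> 1" for s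
    using B[OF that] by (smt (verit) mult_nonneg_nonneg norm_ge_zero)
  have G01: "G 0 \<le> G 1"
    by (rule DERIV_nonneg_imp_nondecreasing[of 0 1]) (use G Gp in auto)
  define \<phi> where "\<phi> s = Re (c * h (of_real s * z)) - cmod c * G s" for s
  have "\<phi> 1 \<le> \<phi> 0"
  proof (rule DERIV_nonpos_imp_nonincreasing[of 0 1])
    fix s :: real assume s: "0 \<le> s" "s \<le> 1"
    have "(\<phi> has_real_derivative Re (z * (c * deriv h (of_real s * z))) - cmod c * G' s) (at s)"
      unfolding \<phi>_def[abs_def] by (intro DERIV_diff hd s DERIV_cmult G)
    moreover have "Re (z * (c * deriv h (of_real s * z))) \<le> cmod c * G' s"
    proof -
      have "Re (z * (c * deriv h (of_real s * z))) \<le> cmod (z * (c * deriv h (of_real s * z)))"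
        by (rule complex_Re_le_cmod)
      also have "\<dots> = cmod c * (cmod z * cmod (deriv h (of_real s * z)))" by (simp add: norm_mult)
      also have "\<dots> \<le> cmod c * G' s" by (intro mult_left_mono B s) auto
      finally show ?thesis .
    qed
    ultimately show "\<exists>y. (\<phi> has_real_derivative y) (at s) \<and> y \<le> 0" by force
  qed simp
  then have "Re (c * h z) - Re (c * h 0) \<le> cmod c * (G 1 - G 0)"
    by (simp add: \<phi>_def algebra_simps)
  moreover have "Re (c * h z) - Re (c * h 0) = (cmod (h z - h 0))^2"
  proof -
    have "Re (c * h z) - Re (c * h 0) = Re (c * (h z - h 0))" by (simp add: algebra_simps)
    also have "c * (h z - h 0) = of_real ((cmod (h z - h 0))^2)"
      using complex_norm_square[of "h z - h 0"] by (simp add: c_def mult.commute)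
    finally show ?thesis by simp
  qed
  moreover have cc: "cmod c = cmod (h z - h 0)" unfolding c_def by (metis complex_mod_cnj)
  ultimately have "cmod (h z - h 0) * cmod (h z - h 0) \<le> cmod (h z - h 0) * (G 1 - G 0)"
    by (simp add: power2_eq_square)
  then show ?thesis using G01
    by (cases "cmod (h z - h 0) = 0") (auto simp: mult_le_cancel_left)
qed

lemma norm_along_ray_le:
  assumes z: "z \<in> ball 0 1" and s: "0 \<le> s" "s \<le> 1" and a: "a \<ge> 0"
    and K: "\<And>u. u \<in> ball 0 1 \<Longrightarrow> weight u powr a * cmod (F u) \<le> K"
  shows "cmod z * cmod (F (of_real s * z)) \<le> K * cmod z * (1 - s * cmod z) powr (- a)"
proof -
  have "s * cmod z < 1" using z s by (simp add: mult_le_one le_less_trans[OF mult_left_le_one_le])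
  then have pos: "0 < 1 - s * cmod z" by simp
  have sz: "of_real s * z \<in> ball 0 1"
    using s z by (simp add: norm_mult mult_left_le_one_le le_less_trans[of _ "cmod z"])
  have "1 - s * cmod z \<le> weight (of_real s * z)"
    using one_minus_norm_le_weight[OF sz] s by (simp add: norm_mult)
  from norm_le_weighted_bound[OF sz K a pos this]
  have "cmod z * cmod (F (of_real s * z)) \<le> cmod z * (K / (1 - s * cmod z) powr a)"
    by (intro mult_left_mono) auto
  also have "\<dots> = K * cmod z * (1 - s * cmod z) powr (- a)" by (simp add: powr_minus divide_inverse)
  finally show ?thesis .
qed

lemma norm_diff_le_powr_integral:
  assumes hh: "h holomorphic_on ball 0 1" and z: "z \<in> ball 0 1" and a: "a \<ge> 0" "a \<noteq> 1"
    and K: "\<And>u. u \<in> ball 0 1 \<Longrightarrow> weight u powr a * cmod (deriv h u) \<le> K"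
  shows "cmod (h z - h 0) \<le> K * ((1 - cmod z) powr (1 - a) - 1) / (a - 1)"
proof -
  define r where "r = cmod z"
  have r: "0 \<le> r" "r < 1" using z by (auto simp: r_def)
  define G where "G s = K * (1 - s * r) powr (1 - a) / (a - 1)" for s
  have pos: "0 < 1 - s * r" if "0 \<le> s" "s \<le> 1" for s
    using r that by (smt (verit) mult_left_le_one_le)
  have "cmod (h z - h 0) \<le> G 1 - G 0"
  proof (rule norm_diff_le_radial_majorant[OF hh z])
    fix s :: real assume s: "0 \<le> s" "s \<le> 1"
    have "((\<lambda>s. 1 - s * r) has_real_derivative (- r)) (at s)"
      by (auto intro!: derivative_eq_intros)
    from DERIV_fun_powr[OF this pos[OF s], of "1 - a"]
    have "((\<lambda>s. (1 - s * r) powr (1 - a)) has_real_derivative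
       (1 - a) * (1 - s * r) powr (1 - a - 1) * - r) (at s)" by simp
    then have "(G has_real_derivative K * ((1 - a) * (1 - s * r) powr (1 - a - 1) * - r) / (a - 1)) (at s)"
      unfolding G_def[abs_def] by (intro DERIV_cdivide DERIV_cmult)
    moreover have "K * ((1 - a) * (1 - s * r) powr (1 - a - 1) * - r) / (a - 1) = K * r * (1 - s * r) powr (- a)"
      using a by (simp add: field_simps)
    ultimately show "(G has_real_derivative K * r * (1 - s * r) powr (- a)) (at s)" by simp
    show "cmod z * cmod (deriv h (of_real s * z)) \<le> K * r * (1 - s * r) powr (- a)"
      unfolding r_def by (rule norm_along_ray_le[OF z s a(1) K])
  qed
  also have "G 1 - G 0 = K * ((1 - cmod z) powr (1 - a) - 1) / (a - 1)"
  proof -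
    have "a - 1 \<noteq> 0" using a by simp
    then show ?thesis by (simp add: G_def r_def diff_divide_distrib right_diff_distrib)
  qed
  finally show ?thesis .
qed

lemma norm_diff_le_ln_integral:
  assumes hh: "h holomorphic_on ball 0 1" and z: "z \<in> ball 0 1"
    and K: "\<And>u. u \<in> ball 0 1 \<Longrightarrow> weight u powr 1 * cmod (deriv h u) \<le> K"
  shows "cmod (h z - h 0) \<le> K * ln (1 / (1 - cmod z))"
proof -
  define r where "r = cmod z"
  have r: "0 \<le> r" "r < 1" using z by (auto simp: r_def)
  define G where "G s = - K * ln (1 - s * r)" for s
  have pos: "0 < 1 - s * r" if "0 \<le> s" "s \<le> 1" for s
    using r that by (smt (verit) mult_left_le_one_le)
  have "cmod (h z - h 0) \<le> G 1 - G 0"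
  proof (rule norm_diff_le_radial_majorant[OF hh z])
    fix s :: real assume s: "0 \<le> s" "s \<le> 1"
    show "(G has_real_derivative K * r / (1 - s * r)) (at s)"
      unfolding G_def[abs_def] using pos[OF s]
      by (auto intro!: derivative_eq_intros simp: field_simps)
    show "cmod z * cmod (deriv h (of_real s * z)) \<le> K * r / (1 - s * r)"
      using norm_along_ray_le[OF z s _ K] pos[OF s] by (simp add: r_def powr_minus divide_inverse)
  qed
  also have "G 1 - G 0 = K * ln (1 / (1 - cmod z))"
    using r by (simp add: G_def r_def ln_div)
  finally show ?thesis .
qed

lemma weighted_deriv_le:
  assumes hh: "h holomorphic_on ball 0 1" and z: "z \<in> ball 0 1" and b: "b \<ge> 0"
    and K: "\<And>u. u \<in> ball 0 1 \<Longrightarrow> weight u powr b * cmod (h u) \<le> K"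
  shows "weight z powr (b + 1) * cmod (deriv h z) \<le> 4 powr (b + 1) * K"
proof -
  have K0: "0 \<le> K" by (rule weighted_bound_nonneg[OF K])
  define r where "r = (1 - cmod z) / 2"
  have r: "0 < r" using z by (simp add: r_def)
  have sub: "cball z r \<subseteq> ball 0 1"
  proof
    fix x assume "x \<in> cball z r"
    then have "cmod x \<le> cmod z + r" using norm_triangle_ineq2[of x z] by (simp add: dist_norm norm_minus_commute)
    then show "x \<in> ball 0 1" using z by (simp add: r_def field_simps)
  qed
  have "cmod ((deriv ^^ 1) h z) \<le> fact 1 * (K / r powr b) / r ^ 1"
  proof (rule Cauchy_inequality)
    show "h holomorphic_on ball z r" using hh sub ball_subset_cball by (meson holomorphic_on_subset subset_trans)
    show "continuous_on (cball z r) h" using hh sub holomorphic_on_imp_continuous_on continuous_on_subset by blast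
    fix x assume x: "cmod (z - x) = r"
    then have xb: "x \<in> ball 0 1" using sub by (auto simp: dist_norm)
    have "cmod x \<le> cmod z + r" using x norm_triangle_ineq2[of x z] by (simp add: norm_minus_commute)
    then have "r \<le> 1 - cmod x" unfolding r_def by argo
    then have "r \<le> weight x" using one_minus_norm_le_weight[OF xb] by linarith
    from norm_le_weighted_bound[OF xb K b r this] show "cmod (h x) \<le> K / r powr b" .
  qed (use r in auto)
  then have d: "cmod (deriv h z) \<le> K / r powr (b + 1)"
    using r by (simp add: powr_add)
  have "weight z \<le> 4 * r" using weight_le_two_one_minus_norm[OF z] by (simp add: r_def)
  then have w: "weight z powr (b + 1) \<le> (4 * r) powr (b + 1)"
    using weight_pos[OF z] b by (intro powr_mono2) auto
  have "weight z powr (b + 1) * cmod (deriv h z) \<le> (4 * r) powr (b + 1) * (K / r powr (b + 1))"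
    using w d weight_pos[OF z] by (intro mult_mono) auto
  also have "\<dots> = 4 powr (b + 1) * K" using r by (simp add: powr_mult)
  finally show ?thesis .
qed

lemma weighted_norm_le_bloch_norm:
  assumes f: "f \<in> bloch_type a" and z: "z \<in> ball 0 1" and a: "a \<ge> 0"
  shows "weight z powr a * cmod (f z) \<le> bloch_norm a f"
proof -
  define K where "K = bloch_norm a f - cmod (f 0)"
  have dk: "weight u powr a * cmod (deriv f u) \<le> K" if "u \<in> ball 0 1" for u
    using bloch_norm_upper[OF f that] by (simp add: K_def)
  have "weight z powr a * cmod (f z - f 0) \<le> K * cmod z"
    by (rule weighted_diff_le_norm[OF bloch_type_holomorphic[OF f] z a dk])
  also have "\<dots> \<le> K" using z weighted_bound_nonneg[OF dk] by (intro mult_right_le_one_le) auto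
  finally have diff: "weight z powr a * cmod (f z - f 0) \<le> K" .
  have w1: "weight z powr a \<le> 1" using powr_mono2[of a "weight z" 1] weight_pos[OF z] a by simp
  have "weight z powr a * cmod (f z) \<le> weight z powr a * cmod (f 0) + weight z powr a * cmod (f z - f 0)"
    using norm_triangle_sub[of "f z" "f 0"] by (simp add: distrib_left[symmetric] mult_left_mono)
  also have "\<dots> \<le> cmod (f 0) + K" using diff mult_right_mono[OF w1 norm_ge_zero[of "f 0"]] by linarith
  finally show ?thesis by (simp add: K_def)
qed

lemma weighted_C_op_le:
  assumes hf: "f holomorphic_on ball 0 1" and hg: "g holomorphic_on ball 0 1" and z: "z \<in> ball 0 1"
    and a: "a \<ge> 0" and K: "\<And>u. u \<in> ball 0 1 \<Longrightarrow> weight u powr a * cmod (deriv (T_op g f) u) \<le> K"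
  shows "weight z powr a * cmod (C_op g f z) \<le> K"
proof (cases "z = 0")
  case True
  then show ?thesis using K[of 0] by (simp add: C_op_def M_op_def deriv_T_op[OF hf hg] mult.commute)
next
  case False
  have "weight z powr a * cmod (T_op g f z - T_op g f 0) \<le> K * cmod z"
    by (rule weighted_diff_le_norm[OF holomorphic_T_op[OF hf hg] z a K])
  then have "weight z powr a * cmod (C_op g f z) * cmod z \<le> K * cmod z"
    by (simp add: T_op_0 T_op_eq_mult_C_op norm_mult mult_ac)
  then show ?thesis using False by simp
qed

lemma norm_deriv_C_op_le:
  assumes hf: "f holomorphic_on ball 0 1" and hg: "g holomorphic_on ball 0 1"
    and z: "z \<in> ball 0 1" and z2: "1/2 \<le> cmod z"
  shows "cmod (deriv (C_op g f) z) \<le> 2 * (cmod (deriv (T_op g f) z) + cmod (C_op g f z))"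
proof -
  have "(1/2) * cmod (deriv (C_op g f) z) \<le> cmod (z * deriv (C_op g f) z)"
    unfolding norm_mult by (rule mult_right_mono[OF z2 norm_ge_zero])
  also have "z * deriv (C_op g f) z = deriv (T_op g f) z - C_op g f z"
    using deriv_T_op_eq_C_op[OF hf hg z] by simp
  also have "cmod \<dots> \<le> cmod (deriv (T_op g f) z) + cmod (C_op g f z)" by (rule norm_triangle_ineq4)
  finally show ?thesis by simp
qed

lemma bounded_op_dominated:
  assumes "bounded_op X nX Y nY S" "A \<ge> 0"
    and "\<And>f. f \<in> X \<Longrightarrow> S f \<in> Y \<Longrightarrow> R f \<in> Z \<and> nZ (R f) \<le> A * nY (S f)"
  shows "bounded_op X nX Z nZ R"
proof -
  from assms(1) obtain C where S: "\<forall>f\<in>X. S f \<in> Y" and C: "\<forall>f\<in>X. nY (S f) \<le> C * nX f"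
    unfolding bounded_op_def by blast
  have "\<forall>f\<in>X. nZ (R f) \<le> (A * C) * nX f"
  proof
    fix f assume f: "f \<in> X"
    have "nZ (R f) \<le> A * nY (S f)" using assms(3)[OF f] S f by blast
    also have "\<dots> \<le> A * (C * nX f)" using C f assms(2) by (intro mult_left_mono) auto
    finally show "nZ (R f) \<le> (A * C) * nX f" by (simp add: mult_ac)
  qed
  then show ?thesis unfolding bounded_op_def using assms(3) S by blast
qed

lemma growth_T_op_imp_C_op:
  assumes hf: "f holomorphic_on ball 0 1" and hg: "g holomorphic_on ball 0 1" and b: "\<beta> > 0"
    and T: "T_op g f \<in> growth_space \<beta>"
  shows "C_op g f \<in> growth_space \<beta>
    \<and> growth_norm \<beta> (C_op g f) \<le> (2 + 2 * 4 powr (\<beta> + 1)) * growth_norm \<beta> (T_op g f)"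
proof -
  define N where "N = growth_norm \<beta> (T_op g f)"
  have N0: "0 \<le> N" using growth_norm_nonneg[OF T] by (simp add: N_def)
  have hN: "weight u powr \<beta> * cmod (T_op g f u) \<le> N" if "u \<in> ball 0 1" for u
    using growth_norm_upper[OF T that] by (simp add: N_def)
  have dh: "weight u powr (\<beta> + 1) * cmod (deriv (T_op g f) u) \<le> 4 powr (\<beta> + 1) * N" if "u \<in> ball 0 1" for u
    by (rule weighted_deriv_le[OF holomorphic_T_op[OF hf hg] that _ hN]) (use b in auto)
  have kb: "weight u powr (\<beta> + 1) * cmod (C_op g f u) \<le> 4 powr (\<beta> + 1) * N" if "u \<in> ball 0 1" for u
    by (rule weighted_C_op_le[OF hf hg that _ dh]) (use b in auto)
  have main: "weight z powr \<beta> * cmod (C_op g f z) \<le> (2 + 2 * 4 powr (\<beta> + 1)) * N" if z: "z \<in> ball 0 1" for z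
  proof (cases "cmod z < 1/2")
    case True
    have "weight z powr \<beta> * cmod (C_op g f z) \<le> 2 * (weight z powr (\<beta> + 1) * cmod (C_op g f z))"
      using mult_right_mono[OF weight_powr_le_near_origin[OF True] norm_ge_zero] by (simp add: mult.assoc)
    also have "\<dots> \<le> 2 * (4 powr (\<beta> + 1) * N)" using kb[OF z] by simp
    also have "\<dots> \<le> (2 + 2 * 4 powr (\<beta> + 1)) * N" using N0 by (simp add: distrib_right)
    finally show ?thesis .
  next
    case False
    have "(1/2) * cmod (C_op g f z) \<le> cmod (T_op g f z)"
      using False mult_right_mono[of "1/2" "cmod z" "cmod (C_op g f z)"]
      by (simp add: T_op_eq_mult_C_op norm_mult)
    then have "weight z powr \<beta> * cmod (C_op g f z) \<le> 2 * (weight z powr \<beta> * cmod (T_op g f z))"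
      using mult_left_mono[of "cmod (C_op g f z)" "2 * cmod (T_op g f z)" "weight z powr \<beta>"]
      by (simp add: mult.left_commute)
    also have "\<dots> \<le> 2 * N" using hN[OF z] by simp
    also have "\<dots> \<le> (2 + 2 * 4 powr (\<beta> + 1)) * N" using N0 by (simp add: distrib_right)
    finally show ?thesis .
  qed
  show ?thesis using growth_spaceI[OF holomorphic_C_op[OF hf hg] main] growth_norm_least[OF main] by (simp add: N_def)
qed

lemma growth_C_op_imp_T_op:
  assumes hf: "f holomorphic_on ball 0 1" and hg: "g holomorphic_on ball 0 1"
    and C: "C_op g f \<in> growth_space \<beta>"
  shows "T_op g f \<in> growth_space \<beta>
    \<and> growth_norm \<beta> (T_op g f) \<le> 1 * growth_norm \<beta> (C_op g f)"
proof -
  have main: "weight z powr \<beta> * cmod (T_op g f z) \<le> growth_norm \<beta> (C_op g f)" if z: "z \<in> ball 0 1" for z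
  proof -
    have "cmod (T_op g f z) \<le> cmod (C_op g f z)" using z
      by (simp add: T_op_eq_mult_C_op norm_mult mult_left_le_one_le less_imp_le)
    then have "weight z powr \<beta> * cmod (T_op g f z) \<le> weight z powr \<beta> * cmod (C_op g f z)"
      by (intro mult_left_mono) auto
    also have "\<dots> \<le> growth_norm \<beta> (C_op g f)" by (rule growth_norm_upper[OF C z])
    finally show ?thesis .
  qed
  show ?thesis using growth_spaceI[OF holomorphic_T_op[OF hf hg] main] growth_norm_least[OF main] by simp
qed

lemma bloch_T_op_imp_C_op:
  assumes hf: "f holomorphic_on ball 0 1" and hg: "g holomorphic_on ball 0 1" and b: "\<beta> > 0"
    and T: "T_op g f \<in> bloch_type \<beta>"
  shows "C_op g f \<in> bloch_type \<beta>
    \<and> bloch_norm \<beta> (C_op g f) \<le> (5 + 2 * 4 powr (\<beta> + 1)) * bloch_norm \<beta> (T_op g f)"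
proof -
  define K where "K = bloch_norm \<beta> (T_op g f)"
  have K0: "0 \<le> K" using bloch_norm_nonneg[OF T] by (simp add: K_def)
  have dh: "weight u powr \<beta> * cmod (deriv (T_op g f) u) \<le> K" if "u \<in> ball 0 1" for u
    using bloch_norm_upper[OF T that] by (simp add: K_def T_op_0)
  have kb: "weight u powr \<beta> * cmod (C_op g f u) \<le> K" if "u \<in> ball 0 1" for u
    by (rule weighted_C_op_le[OF hf hg that _ dh]) (use b in auto)
  have dk: "weight u powr (\<beta> + 1) * cmod (deriv (C_op g f) u) \<le> 4 powr (\<beta> + 1) * K" if "u \<in> ball 0 1" for u
    by (rule weighted_deriv_le[OF holomorphic_C_op[OF hf hg] that _ kb]) (use b in auto)
  have main: "weight z powr \<beta> * cmod (deriv (C_op g f) z) \<le> 4 * K + 2 * 4 powr (\<beta> + 1) * K" if z: "z \<in> ball 0 1" for z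
  proof (cases "cmod z < 1/2")
    case True
    have "weight z powr \<beta> * cmod (deriv (C_op g f) z) \<le> 2 * (weight z powr (\<beta> + 1) * cmod (deriv (C_op g f) z))"
      using mult_right_mono[OF weight_powr_le_near_origin[OF True] norm_ge_zero] by (simp add: mult.assoc)
    also have "\<dots> \<le> 2 * (4 powr (\<beta> + 1) * K)" using dk[OF z] by simp
    also have "\<dots> \<le> 4 * K + 2 * 4 powr (\<beta> + 1) * K" using K0 by simp
    finally show ?thesis .
  next
    case False
    have "weight z powr \<beta> * cmod (deriv (C_op g f) z)
        \<le> weight z powr \<beta> * (2 * (cmod (deriv (T_op g f) z) + cmod (C_op g f z)))"
      using norm_deriv_C_op_le[OF hf hg z] False by (intro mult_left_mono) auto
    also have "\<dots> = 2 * (weight z powr \<beta> * cmod (deriv (T_op g f) z) + weight z powr \<beta> * cmod (C_op g f z))"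
      by (simp add: algebra_simps)
    also have "\<dots> \<le> 4 * K" using dh[OF z] kb[OF z] by simp
    also have "\<dots> \<le> 4 * K + 2 * 4 powr (\<beta> + 1) * K" using K0 by simp
    finally show ?thesis .
  qed
  have "bloch_norm \<beta> (C_op g f) \<le> cmod (C_op g f 0) + (4 * K + 2 * 4 powr (\<beta> + 1) * K)"
    by (rule bloch_norm_least[OF main])
  also have "\<dots> \<le> (5 + 2 * 4 powr (\<beta> + 1)) * K" using kb[of 0] by (simp add: algebra_simps)
  finally show ?thesis using bloch_typeI[OF holomorphic_C_op[OF hf hg] main] by (simp add: K_def)
qed

lemma bloch_C_op_imp_T_op:
  assumes hf: "f holomorphic_on ball 0 1" and hg: "g holomorphic_on ball 0 1" and b: "\<beta> > 0"
    and C: "C_op g f \<in> bloch_type \<beta>"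
  shows "T_op g f \<in> bloch_type \<beta>
    \<and> bloch_norm \<beta> (T_op g f) \<le> 2 * bloch_norm \<beta> (C_op g f)"
proof -
  define N where "N = bloch_norm \<beta> (C_op g f)"
  have main: "weight z powr \<beta> * cmod (deriv (T_op g f) z) \<le> 2 * N" if z: "z \<in> ball 0 1" for z
  proof -
    have "cmod (deriv (T_op g f) z) \<le> cmod (C_op g f z) + cmod (z * deriv (C_op g f) z)"
      unfolding deriv_T_op_eq_C_op[OF hf hg z] by (rule norm_triangle_ineq)
    also have "cmod (z * deriv (C_op g f) z) \<le> cmod (deriv (C_op g f) z)"
      unfolding norm_mult using z by (intro mult_left_le_one_le) auto
    finally have "weight z powr \<beta> * cmod (deriv (T_op g f) z)
        \<le> weight z powr \<beta> * cmod (C_op g f z) + weight z powr \<beta> * cmod (deriv (C_op g f) z)"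
      by (simp add: distrib_left[symmetric] mult_left_mono)
    also have "\<dots> \<le> N + N"
      using weighted_norm_le_bloch_norm[OF C z] bloch_norm_upper[OF C z] norm_ge_zero[of "C_op g f 0"] b
      unfolding N_def by linarith
    finally show ?thesis by simp
  qed
  show ?thesis using bloch_typeI[OF holomorphic_T_op[OF hf hg] main] bloch_norm_least[OF main] by (simp add: N_def T_op_0)
qed

lemma growth_T_op_imp_M_op:
  assumes hf: "f holomorphic_on ball 0 1" and hg: "g holomorphic_on ball 0 1" and b: "\<beta> > 0"
    and T: "T_op g f \<in> growth_space \<beta>"
  shows "M_op g f \<in> growth_space (\<beta> + 1)
    \<and> growth_norm (\<beta> + 1) (M_op g f) \<le> 4 powr (\<beta> + 1) * growth_norm \<beta> (T_op g f)"
proof -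
  have main: "weight z powr (\<beta> + 1) * cmod (M_op g f z) \<le> 4 powr (\<beta> + 1) * growth_norm \<beta> (T_op g f)"
    if z: "z \<in> ball 0 1" for z
    using weighted_deriv_le[OF holomorphic_T_op[OF hf hg] z _ growth_norm_upper[OF T]] b deriv_T_op[OF hf hg z] by simp
  show ?thesis using growth_spaceI[OF holomorphic_M_op[OF hf hg] main] growth_norm_least[OF main] by simp
qed

lemma growth_M_op_imp_T_op:
  assumes hf: "f holomorphic_on ball 0 1" and hg: "g holomorphic_on ball 0 1" and b: "\<beta> > 0"
    and M: "M_op g f \<in> growth_space (\<beta> + 1)"
  shows "T_op g f \<in> growth_space \<beta>
    \<and> growth_norm \<beta> (T_op g f) \<le> (2 powr \<beta> / \<beta>) * growth_norm (\<beta> + 1) (M_op g f)"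
proof -
  define N where "N = growth_norm (\<beta> + 1) (M_op g f)"
  have K: "weight u powr (\<beta> + 1) * cmod (deriv (T_op g f) u) \<le> N" if "u \<in> ball 0 1" for u
    using growth_norm_upper[OF M that] deriv_T_op[OF hf hg that] by (simp add: N_def)
  have N0: "0 \<le> N" by (rule weighted_bound_nonneg[OF K])
  have main: "weight z powr \<beta> * cmod (T_op g f z) \<le> (2 powr \<beta> / \<beta>) * N" if z: "z \<in> ball 0 1" for z
  proof -
    define r where "r = cmod z"
    have r: "0 \<le> r" "r < 1" using z by (auto simp: r_def)
    have "cmod (T_op g f z - T_op g f 0) \<le> N * ((1 - cmod z) powr (1 - (\<beta> + 1)) - 1) / (\<beta> + 1 - 1)"
      by (rule norm_diff_le_powr_integral[OF holomorphic_T_op[OF hf hg] z _ _ K]) (use b in auto)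
    then have "cmod (T_op g f z) \<le> N * ((1 - r) powr (- \<beta>) - 1) / \<beta>" by (simp add: T_op_0 r_def)
    also have "\<dots> \<le> N * (1 - r) powr (- \<beta>) / \<beta>"
      using N0 b by (intro divide_right_mono mult_left_mono) auto
    finally have hT: "cmod (T_op g f z) \<le> N * (1 - r) powr (- \<beta>) / \<beta>" .
    have "weight z powr \<beta> \<le> (2 * (1 - r)) powr \<beta>"
      using weight_le_two_one_minus_norm[OF z] weight_pos[OF z] b by (intro powr_mono2) (auto simp: r_def)
    also have "\<dots> = 2 powr \<beta> * (1 - r) powr \<beta>" by (rule powr_mult)
    finally have hw: "weight z powr \<beta> \<le> 2 powr \<beta> * (1 - r) powr \<beta>" .
    have "weight z powr \<beta> * cmod (T_op g f z) \<le> (2 powr \<beta> * (1 - r) powr \<beta>) * (N * (1 - r) powr (- \<beta>) / \<beta>)"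
      using hw hT by (intro mult_mono) auto
    also have "\<dots> = (2 powr \<beta> / \<beta>) * N * ((1 - r) powr \<beta> * (1 - r) powr (- \<beta>))" by (simp add: field_simps)
    also have "(1 - r) powr \<beta> * (1 - r) powr (- \<beta>) = 1" using r by (simp add: powr_add[symmetric])
    finally show ?thesis by simp
  qed
  show ?thesis using growth_spaceI[OF holomorphic_T_op[OF hf hg] main] growth_norm_least[OF main] by (simp add: N_def)
qed

lemma bloch_T_op_iff_M_op:
  assumes hf: "f holomorphic_on ball 0 1" and hg: "g holomorphic_on ball 0 1"
  shows "(T_op g f \<in> bloch_type \<beta> \<longleftrightarrow> M_op g f \<in> growth_space \<beta>)
    \<and> bloch_norm \<beta> (T_op g f) = growth_norm \<beta> (M_op g f)"
proof -
  have eqC: "(\<forall>z\<in>ball 0 1. weight z powr \<beta> * cmod (deriv (T_op g f) z) \<le> C) \<longleftrightarrow>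
      (\<forall>z\<in>ball 0 1. weight z powr \<beta> * cmod (M_op g f z) \<le> C)" for C
    using deriv_T_op[OF hf hg] by auto
  have "T_op g f \<in> bloch_type \<beta> \<longleftrightarrow> M_op g f \<in> growth_space \<beta>"
    unfolding bloch_type_def growth_space_def mem_Collect_eq eqC using holomorphic_T_op[OF hf hg] holomorphic_M_op[OF hf hg] by blast
  moreover have "(SUP z\<in>ball 0 1. weight z powr \<beta> * cmod (deriv (T_op g f) z)) = (SUP z\<in>ball 0 1. weight z powr \<beta> * cmod (M_op g f z))"
    by (rule SUP_cong) (simp_all add: deriv_T_op[OF hf hg])
  then have "bloch_norm \<beta> (T_op g f) = growth_norm \<beta> (M_op g f)"
    unfolding bloch_norm_def growth_norm_def by (simp add: T_op_0)
  ultimately show ?thesis by blast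
qed

lemma bounded_C_op_iff_T_op_growth:
  assumes hX: "\<And>f. f \<in> X \<Longrightarrow> f holomorphic_on ball 0 1"
    and hg: "g holomorphic_on ball 0 1" and b: "\<beta> > 0"
  shows "bounded_op X nX (growth_space \<beta>) (growth_norm \<beta>) (C_op g)
     \<longleftrightarrow> bounded_op X nX (growth_space \<beta>) (growth_norm \<beta>) (T_op g)"
proof
  assume "bounded_op X nX (growth_space \<beta>) (growth_norm \<beta>) (C_op g)"
  then show "bounded_op X nX (growth_space \<beta>) (growth_norm \<beta>) (T_op g)"
    by (rule bounded_op_dominated[where A=1]) (auto dest: growth_C_op_imp_T_op[OF hX hg])
next
  assume "bounded_op X nX (growth_space \<beta>) (growth_norm \<beta>) (T_op g)"
  then show "bounded_op X nX (growth_space \<beta>) (growth_norm \<beta>) (C_op g)"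
    by (rule bounded_op_dominated[where A="2 + 2 * 4 powr (\<beta> + 1)"])
      (auto dest: growth_T_op_imp_C_op[OF hX hg b])
qed

lemma bounded_T_op_iff_M_op_growth:
  assumes hX: "\<And>f. f \<in> X \<Longrightarrow> f holomorphic_on ball 0 1"
    and hg: "g holomorphic_on ball 0 1" and b: "\<beta> > 0"
  shows "bounded_op X nX (growth_space \<beta>) (growth_norm \<beta>) (T_op g)
     \<longleftrightarrow> bounded_op X nX (growth_space (\<beta> + 1)) (growth_norm (\<beta> + 1)) (M_op g)"
proof
  assume "bounded_op X nX (growth_space \<beta>) (growth_norm \<beta>) (T_op g)"
  then show "bounded_op X nX (growth_space (\<beta> + 1)) (growth_norm (\<beta> + 1)) (M_op g)"
    by (rule bounded_op_dominated[where A="4 powr (\<beta> + 1)"]) (auto dest: growth_T_op_imp_M_op[OF hX hg b])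
next
  assume "bounded_op X nX (growth_space (\<beta> + 1)) (growth_norm (\<beta> + 1)) (M_op g)"
  then show "bounded_op X nX (growth_space \<beta>) (growth_norm \<beta>) (T_op g)"
    by (rule bounded_op_dominated[where A="2 powr \<beta> / \<beta>"])
      (use b in \<open>auto dest: growth_M_op_imp_T_op[OF hX hg b]\<close>)
qed

lemma bounded_C_op_iff_T_op_bloch:
  assumes hX: "\<And>f. f \<in> X \<Longrightarrow> f holomorphic_on ball 0 1"
    and hg: "g holomorphic_on ball 0 1" and b: "\<beta> > 0"
  shows "bounded_op X nX (bloch_type \<beta>) (bloch_norm \<beta>) (C_op g)
     \<longleftrightarrow> bounded_op X nX (bloch_type \<beta>) (bloch_norm \<beta>) (T_op g)"
proof
  assume "bounded_op X nX (bloch_type \<beta>) (bloch_norm \<beta>) (C_op g)"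
  then show "bounded_op X nX (bloch_type \<beta>) (bloch_norm \<beta>) (T_op g)"
    by (rule bounded_op_dominated[where A=2]) (auto dest: bloch_C_op_imp_T_op[OF hX hg b])
next
  assume "bounded_op X nX (bloch_type \<beta>) (bloch_norm \<beta>) (T_op g)"
  then show "bounded_op X nX (bloch_type \<beta>) (bloch_norm \<beta>) (C_op g)"
    by (rule bounded_op_dominated[where A="5 + 2 * 4 powr (\<beta> + 1)"])
      (auto dest: bloch_T_op_imp_C_op[OF hX hg b])
qed

lemma bounded_T_op_iff_M_op_bloch:
  assumes hX: "\<And>f. f \<in> X \<Longrightarrow> f holomorphic_on ball 0 1" and hg: "g holomorphic_on ball 0 1"
  shows "bounded_op X nX (bloch_type \<beta>) (bloch_norm \<beta>) (T_op g)
     \<longleftrightarrow> bounded_op X nX (growth_space \<beta>) (growth_norm \<beta>) (M_op g)"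
  using bloch_T_op_iff_M_op[OF hX hg, of _ \<beta>] unfolding bounded_op_def by simp

lemma weight_le_kernel_denom:
  assumes a: "a \<in> ball 0 1" and w: "w \<in> ball 0 1"
  shows "weight w \<le> 2 * cmod (1 - cnj a * w)" "weight a \<le> 2 * cmod (1 - cnj a * w)"
proof -
  have n: "1 - cmod a * cmod w \<le> cmod (1 - cnj a * w)"
    using norm_triangle_ineq2[of 1 "cnj a * w"] by (simp add: norm_mult)
  have la: "cmod a \<le> 1" "cmod w \<le> 1" using a w by auto
  have "1 - cmod w \<le> 1 - cmod a * cmod w" using la mult_left_le_one_le[of "cmod w" "cmod a"] by simp
  then have "1 - cmod w \<le> cmod (1 - cnj a * w)" using n by (rule order_trans)
  then have "2 * (1 - cmod w) \<le> 2 * cmod (1 - cnj a * w)" by (rule mult_left_mono) simp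
  with weight_le_two_one_minus_norm[OF w] show "weight w \<le> 2 * cmod (1 - cnj a * w)" by (rule order_trans)
  have "1 - cmod a \<le> 1 - cmod a * cmod w" using la mult_right_le_one_le[of "cmod a" "cmod w"] by simp
  then have "1 - cmod a \<le> cmod (1 - cnj a * w)" using n by (rule order_trans)
  then have "2 * (1 - cmod a) \<le> 2 * cmod (1 - cnj a * w)" by (rule mult_left_mono) simp
  with weight_le_two_one_minus_norm[OF a] show "weight a \<le> 2 * cmod (1 - cnj a * w)" by (rule order_trans)
qed

lemma kernel_denom_pos: "a \<in> ball 0 1 \<Longrightarrow> w \<in> ball 0 1 \<Longrightarrow>
    0 < cmod (1 - cnj a * w)"
  using weight_le_kernel_denom(1)[of a w] weight_pos[of w] by linarith

lemma kernel_denom_not_nonpos_real: "a \<in> ball 0 1 \<Longrightarrow> w \<in> ball 0 1 \<Longrightarrow>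
    1 - cnj a * w \<notin> \<real>\<^sub>\<le>\<^sub>0"
proof -
  assume a: "a \<in> ball 0 1" and w: "w \<in> ball 0 1"
  have "cmod (cnj a * w) < 1" using a w by (simp add: norm_mult mult_le_one mult_strict_mono' le_less_trans[OF mult_left_le_one_le])
  then have "Re (cnj a * w) < 1" using complex_Re_le_cmod le_less_trans by blast
  then have "0 < Re (1 - cnj a * w)" by simp
  then show ?thesis by (auto simp: complex_nonpos_Reals_iff)
qed

definition test_fun :: "real \<Rightarrow> complex \<Rightarrow> nat \<Rightarrow> complex \<Rightarrow> complex" where
  "test_fun c a m = (\<lambda>w. of_real (weight a powr (real m - c)) / (1 - cnj a * w) ^ m)"

lemma holomorphic_test_fun: "a \<in> ball 0 1 \<Longrightarrow> test_fun c a m holomorphic_on ball 0 1"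
  unfolding test_fun_def using kernel_denom_pos by (intro holomorphic_intros) force

lemma test_fun_at_centre: "a \<in> ball 0 1 \<Longrightarrow> test_fun c a m a = of_real (weight a powr (- c))"
proof -
  assume a: "a \<in> ball 0 1"
  have "1 - cnj a * a = of_real (weight a)" using complex_norm_square[of a] by (simp add: mult.commute)
  then have "test_fun c a m a = of_real (weight a powr (real m - c) / weight a ^ m)" by (simp add: test_fun_def)
  also have "weight a powr (real m - c) / weight a ^ m = weight a powr (- c)"
    using weight_pos[OF a] by (simp add: powr_diff powr_realpow[symmetric] powr_minus divide_inverse)
  finally show ?thesis .
qed

lemma has_field_derivative_test_fun:
  assumes a: "a \<in> ball 0 1" and w: "w \<in> ball 0 1"
  shows "(test_fun c a m has_field_derivative
     of_real (weight a powr (real m - c)) * (of_nat m * cnj a) / (1 - cnj a * w) ^ (m + 1)) (at w)"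
proof -
  define q where "q = 1 - cnj a * w"
  define X :: complex where "X = of_real (weight a powr (real m - c))"
  have q: "q \<noteq> 0" using kernel_denom_pos[OF a w] by (auto simp: q_def)
  have "((\<lambda>w. (1 - cnj a * w) ^ m) has_field_derivative of_nat m * (1 - cnj a * w) ^ (m - 1) * - cnj a) (at w)"
    by (auto intro!: derivative_eq_intros)
  then have "((\<lambda>w. X / (1 - cnj a * w) ^ m) has_field_derivative
      (0 * q ^ m - X * (of_nat m * q ^ (m - 1) * - cnj a)) / (q ^ m * q ^ m)) (at w)"
    unfolding q_def by (rule DERIV_divide[OF DERIV_const]) (use q in \<open>simp add: q_def\<close>)
  moreover have "(0 * q ^ m - X * (of_nat m * q ^ (m - 1) * - cnj a)) / (q ^ m * q ^ m)
      = X * (of_nat m * cnj a) / q ^ (m + 1)"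
    using q by (cases m) (simp_all add: field_simps)
  ultimately show ?thesis unfolding test_fun_def X_def q_def by simp
qed

lemma weighted_test_fun_le:
  assumes a: "a \<in> ball 0 1" and w: "w \<in> ball 0 1" and c: "0 \<le> c" "c \<le> real m"
  shows "weight w powr c * cmod (test_fun c a m w) \<le> 2 ^ m"
proof -
  define D where "D = cmod (1 - cnj a * w)"
  have D: "0 < D" using kernel_denom_pos[OF a w] by (simp add: D_def)
  have "weight w powr c \<le> (2 * D) powr c"
    using weight_le_kernel_denom(1)[OF a w] weight_pos[OF w] c by (intro powr_mono2) (auto simp: D_def)
  moreover have "weight a powr (real m - c) \<le> (2 * D) powr (real m - c)"
    using weight_le_kernel_denom(2)[OF a w] weight_pos[OF a] c by (intro powr_mono2) (auto simp: D_def)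
  ultimately have "weight w powr c * weight a powr (real m - c) \<le> (2 * D) powr c * (2 * D) powr (real m - c)"
    by (intro mult_mono) auto
  also have "\<dots> = (2 * D) ^ m" using D by (simp add: powr_add[symmetric] powr_realpow)
  finally have 1: "weight w powr c * weight a powr (real m - c) \<le> 2 ^ m * D ^ m" by (simp add: power_mult_distrib)
  have "cmod (test_fun c a m w) = weight a powr (real m - c) / D ^ m"
    by (simp add: test_fun_def D_def norm_divide norm_power)
  then have "weight w powr c * cmod (test_fun c a m w) = (weight w powr c * weight a powr (real m - c)) / D ^ m" by simp
  also have "\<dots> \<le> (2 ^ m * D ^ m) / D ^ m" using 1 D by (intro divide_right_mono) auto
  also have "\<dots> = 2 ^ m" using D by simp
  finally show ?thesis .
qed

lemma weighted_deriv_test_fun_le: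
  assumes a: "a \<in> ball 0 1" and w: "w \<in> ball 0 1" and c: "0 \<le> c + 1" "c + 1 \<le> real m"
  shows "weight w powr (c + 1) * cmod (deriv (test_fun c a m) w) \<le> real m * 2 ^ (m + 1)"
proof -
  define D where "D = cmod (1 - cnj a * w)"
  have D: "0 < D" using kernel_denom_pos[OF a w] by (simp add: D_def)
  define A where "A = weight a powr (real m - c)"
  have A0: "0 \<le> A" by (simp add: A_def)
  have "weight w powr (c + 1) \<le> (2 * D) powr (c + 1)"
    using weight_le_kernel_denom(1)[OF a w] weight_pos[OF w] c by (intro powr_mono2) (auto simp: D_def)
  moreover have "A \<le> (2 * D) powr (real m - c)"
    unfolding A_def using weight_le_kernel_denom(2)[OF a w] weight_pos[OF a] c
    by (intro powr_mono2) (auto simp: D_def)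
  ultimately have "weight w powr (c + 1) * A \<le> (2 * D) powr (c + 1) * (2 * D) powr (real m - c)"
    using A0 by (intro mult_mono) auto
  also have "\<dots> = (2 * D) powr real (m + 1)" by (simp add: powr_add[symmetric])
  also have "\<dots> = (2 * D) ^ (m + 1)" using D by (intro powr_realpow) simp
  also have "\<dots> = 2 ^ (m + 1) * D ^ (m + 1)" by (rule power_mult_distrib)
  finally have bound: "weight w powr (c + 1) * A \<le> 2 ^ (m + 1) * D ^ (m + 1)" .
  have "weight w powr (c + 1) * cmod (deriv (test_fun c a m) w)
      = (weight w powr (c + 1) * A) * (real m * cmod a) / D ^ (m + 1)"
    using A0 by (simp add: DERIV_imp_deriv[OF has_field_derivative_test_fun[OF a w]] A_def D_def
        norm_divide norm_mult norm_power)
  also have "\<dots> \<le> (2 ^ (m + 1) * D ^ (m + 1)) * (real m * 1) / D ^ (m + 1)"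
  proof (rule divide_right_mono)
    show "weight w powr (c + 1) * A * (real m * cmod a) \<le> 2 ^ (m + 1) * D ^ (m + 1) * (real m * 1)"
      by (rule mult_mono[OF bound]) (use a D in \<open>auto intro: mult_right_le_one_le\<close>)
  qed (use D in simp)
  also have "\<dots> = real m * 2 ^ (m + 1)" using D by simp
  finally show ?thesis .
qed

lemma test_fun_in_growth_space:
  assumes a: "a \<in> ball 0 1" and c: "0 \<le> c" "c \<le> real m"
  shows "test_fun c a m \<in> growth_space c \<and> growth_norm c (test_fun c a m) \<le> 2 ^ m"
  using growth_spaceI[OF holomorphic_test_fun[OF a] weighted_test_fun_le[OF a _ c]] growth_norm_least[OF weighted_test_fun_le[OF a _ c]] by blast

lemma bounded_M_op_growthD:
  assumes M: "bounded_op (growth_space \<gamma>) (growth_norm \<gamma>) (growth_space \<delta>) (growth_norm \<delta>) (M_op g)"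
    and c: "\<gamma> \<ge> 0"
  shows "\<exists>C. \<forall>z\<in>ball 0 1. weight z powr (\<delta> - \<gamma>) * cmod (deriv g z) \<le> C"
proof -
  obtain C where MS: "\<forall>f\<in>growth_space \<gamma>. M_op g f \<in> growth_space \<delta>"
    and C: "\<forall>f\<in>growth_space \<gamma>. growth_norm \<delta> (M_op g f) \<le> C * growth_norm \<gamma> f"
    using M unfolding bounded_op_def by blast
  define m where "m = nat \<lceil>\<gamma>\<rceil>"
  have gm: "\<gamma> \<le> real m" unfolding m_def by (rule real_nat_ceiling_ge)
  have "weight z powr (\<delta> - \<gamma>) * cmod (deriv g z) \<le> max C 0 * 2 ^ m" if z: "z \<in> ball 0 1" for z
  proof -
    let ?f = "test_fun \<gamma> z m"
    have fs: "?f \<in> growth_space \<gamma>" and fn: "growth_norm \<gamma> ?f \<le> 2 ^ m"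
      using test_fun_in_growth_space[OF z c gm] by auto
    have "weight z powr (\<delta> - \<gamma>) * cmod (deriv g z) = weight z powr \<delta> * cmod (M_op g ?f z)"
      using weight_pos[OF z] by (simp add: M_op_def test_fun_at_centre[OF z] norm_mult powr_diff powr_minus divide_inverse norm_inverse)
    also have "\<dots> \<le> growth_norm \<delta> (M_op g ?f)"
      using growth_norm_upper[OF MS[rule_format, OF fs] z] .
    also have "\<dots> \<le> max C 0 * growth_norm \<gamma> ?f"
      using C fs growth_norm_nonneg[OF fs] by (metis max.cobounded1 mult_right_mono order_trans)
    also have "\<dots> \<le> max C 0 * 2 ^ m" using fn by (intro mult_left_mono) auto
    finally show ?thesis .
  qed
  then show ?thesis by blast
qed

lemma bounded_M_op_growthI:
  assumes hg: "g holomorphic_on ball 0 1"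
    and C: "\<And>z. z \<in> ball 0 1 \<Longrightarrow> weight z powr (\<delta> - \<gamma>) * cmod (deriv g z) \<le> C"
  shows "bounded_op (growth_space \<gamma>) (growth_norm \<gamma>) (growth_space \<delta>) (growth_norm \<delta>) (M_op g)"
proof -
  have C0: "0 \<le> C" by (rule weighted_bound_nonneg[OF C])
  have main: "weight z powr \<delta> * cmod (M_op g f z) \<le> C * growth_norm \<gamma> f"
    if f: "f \<in> growth_space \<gamma>" and z: "z \<in> ball 0 1" for f z
  proof -
    have "weight z powr \<delta> * cmod (M_op g f z)
        = (weight z powr (\<delta> - \<gamma>) * cmod (deriv g z)) * (weight z powr \<gamma> * cmod (f z))"
      using weight_pos[OF z] by (simp add: M_op_def norm_mult powr_add[symmetric] mult_ac)
    also have "\<dots> \<le> C * growth_norm \<gamma> f"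
      using C[OF z] growth_norm_upper[OF f z] C0 by (intro mult_mono) auto
    finally show ?thesis .
  qed
  show ?thesis unfolding bounded_op_def
    using growth_spaceI[OF holomorphic_M_op[OF growth_space_holomorphic hg] main]
      growth_norm_least[OF main] by blast
qed

lemma bounded_M_op_growth_iff:
  assumes "g holomorphic_on ball 0 1" and "\<gamma> \<ge> 0"
  shows "bounded_op (growth_space \<gamma>) (growth_norm \<gamma>) (growth_space \<delta>) (growth_norm \<delta>) (M_op g)
       \<longleftrightarrow> (\<exists>C. \<forall>z\<in>ball 0 1. weight z powr (\<delta> - \<gamma>) * cmod (deriv g z) \<le> C)"
  using bounded_M_op_growthD bounded_M_op_growthI assms by metis

abbreviation bloch_unit_ball :: "real \<Rightarrow> (complex \<Rightarrow> complex) set" where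
  "bloch_unit_ball c \<equiv> {f \<in> bloch_type c. bloch_norm c f \<le> 1}"

lemma norm_le_of_bloch_unit_ball:
  assumes f: "f \<in> bloch_unit_ball c" and z: "z \<in> ball 0 1" and c: "c \<ge> 0"
  shows "cmod (f z) \<le> 1 / weight z powr c"
proof -
  have "weight z powr c * cmod (f z) \<le> 1"
    using weighted_norm_le_bloch_norm[of f c z] f z c by force
  then show ?thesis using weight_pos[OF z] by (simp add: field_simps mult.commute)
qed

lemma zero_in_bloch_unit_ball: "(\<lambda>_. 0) \<in> bloch_unit_ball c"
proof -
  have "bloch_norm c (\<lambda>_. 0) \<le> cmod 0 + 0" by (rule bloch_norm_least) simp
  then show ?thesis by (auto intro!: bloch_typeI[where B=0])
qed

lemma point_eval_bdd_above: "z \<in> ball 0 1 \<Longrightarrow> c \<ge> 0 \<Longrightarrow>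
    bdd_above ((\<lambda>f. cmod (f z)) ` bloch_unit_ball c)"
  using norm_le_of_bloch_unit_ball by (intro bdd_aboveI2) blast

lemma norm_le_point_eval_norm: "f \<in> bloch_unit_ball c \<Longrightarrow> z \<in> ball 0 1 \<Longrightarrow> c \<ge> 0 \<Longrightarrow>
    cmod (f z) \<le> point_eval_norm c z"
  unfolding point_eval_norm_def by (rule cSUP_upper[OF _ point_eval_bdd_above])

lemma point_eval_norm_least: "(\<And>f. f \<in> bloch_unit_ball c \<Longrightarrow> cmod (f z) \<le> B) \<Longrightarrow>
    point_eval_norm c z \<le> B"
  unfolding point_eval_norm_def using zero_in_bloch_unit_ball by (intro cSUP_least) auto

lemma point_eval_norm_nonneg: "z \<in> ball 0 1 \<Longrightarrow> c \<ge> 0 \<Longrightarrow>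
    0 \<le> point_eval_norm c z"
  using norm_le_point_eval_norm[OF zero_in_bloch_unit_ball] by fastforce

lemma divide_in_bloch_unit_ball:
  assumes f: "f \<in> bloch_type c" and t: "bloch_norm c f \<le> t" "0 < t"
  shows "(\<lambda>w. f w / of_real t) \<in> bloch_unit_ball c"
proof -
  let ?h = "\<lambda>w. f w / of_real t"
  have hh: "?h holomorphic_on ball 0 1" using bloch_type_holomorphic[OF f] by (intro holomorphic_intros) auto
  have B: "weight u powr c * cmod (deriv ?h u) \<le> (bloch_norm c f - cmod (f 0)) / t" if u: "u \<in> ball 0 1" for u
  proof -
    have "deriv ?h u = deriv f u / of_real t"
      by (rule deriv_cdivide_right[OF holomorphic_on_imp_differentiable_at[OF bloch_type_holomorphic[OF f] open_ball u]])
    then have "weight u powr c * cmod (deriv ?h u) = (weight u powr c * cmod (deriv f u)) / t"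
      using t by (simp add: norm_divide)
    also have "\<dots> \<le> (bloch_norm c f - cmod (f 0)) / t"
      using bloch_norm_upper[OF f u] t by (intro divide_right_mono) auto
    finally show ?thesis .
  qed
  have "bloch_norm c ?h \<le> cmod (?h 0) + (bloch_norm c f - cmod (f 0)) / t" by (rule bloch_norm_least[OF B])
  also have "\<dots> = bloch_norm c f / t" using t by (simp add: norm_divide diff_divide_distrib)
  also have "\<dots> \<le> 1" using t by simp
  finally show ?thesis using bloch_typeI[OF hh B] by blast
qed

lemma norm_le_point_eval_norm_mult:
  assumes f: "f \<in> bloch_type c" and z: "z \<in> ball 0 1" and c: "c \<ge> 0"
  shows "cmod (f z) \<le> point_eval_norm c z * bloch_norm c f"
proof -
  define n where "n = bloch_norm c f"
  define p where "p = point_eval_norm c z"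
  have n0: "0 \<le> n" using bloch_norm_nonneg[OF f] by (simp add: n_def)
  have p0: "0 \<le> p" using point_eval_norm_nonneg[OF z c] by (simp add: p_def)
  have t: "cmod (f z) \<le> p * t" if t: "n < t" for t
  proof -
    have tp: "0 < t" using t n0 by linarith
    have "cmod (f z) / t \<le> p"
      using norm_le_point_eval_norm[OF divide_in_bloch_unit_ball[OF f _ tp] z c] t tp
      by (simp add: n_def p_def norm_divide)
    then show ?thesis using tp by (simp add: field_simps mult.commute)
  qed
  show ?thesis unfolding n_def[symmetric] p_def[symmetric]
  proof (rule field_le_epsilon)
    fix e :: real assume e: "0 < e"
    have "cmod (f z) \<le> p * (n + e / (p + 1))" using e p0 by (intro t) simp
    also have "\<dots> = p * n + e * (p / (p + 1))" using p0 by (simp add: field_simps)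
    also have "\<dots> \<le> p * n + e * 1" using p0 e by (intro add_left_mono mult_left_mono) auto
    finally show "cmod (f z) \<le> p * n + e" by simp
  qed
qed

lemma bounded_M_op_blochD:
  assumes M: "bounded_op (bloch_type \<gamma>) (bloch_norm \<gamma>) (growth_space \<beta>) (growth_norm \<beta>) (M_op g)"
  shows "\<exists>C. \<forall>z\<in>ball 0 1. weight z powr \<beta> * point_eval_norm \<gamma> z * cmod (deriv g z) \<le> C"
proof -
  obtain C where MS: "\<forall>f\<in>bloch_type \<gamma>. M_op g f \<in> growth_space \<beta>"
    and C: "\<forall>f\<in>bloch_type \<gamma>. growth_norm \<beta> (M_op g f) \<le> C * bloch_norm \<gamma> f"
    using M unfolding bounded_op_def by blast
  have "weight z powr \<beta> * point_eval_norm \<gamma> z * cmod (deriv g z) \<le> max C 0" if z: "z \<in> ball 0 1" for z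
  proof (cases "deriv g z = 0")
    case False
    define A where "A = weight z powr \<beta> * cmod (deriv g z)"
    have A: "0 < A" using False weight_pos[OF z] by (simp add: A_def)
    have "cmod (f z) \<le> max C 0 / A" if f: "f \<in> bloch_unit_ball \<gamma>" for f
    proof -
      have fb: "f \<in> bloch_type \<gamma>" and n: "bloch_norm \<gamma> f \<le> 1" using f by auto
      have "cmod (f z) * A = weight z powr \<beta> * cmod (M_op g f z)" by (simp add: A_def M_op_def norm_mult mult_ac)
      also have "\<dots> \<le> growth_norm \<beta> (M_op g f)" by (rule growth_norm_upper[OF MS[rule_format, OF fb] z])
      also have "\<dots> \<le> max C 0 * bloch_norm \<gamma> f"
        using C fb bloch_norm_nonneg[OF fb] by (metis max.cobounded1 mult_right_mono order_trans)
      also have "\<dots> \<le> max C 0" using n by (simp add: mult_left_le)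
      finally show ?thesis using A by (simp add: field_simps)
    qed
    then have "point_eval_norm \<gamma> z \<le> max C 0 / A" by (rule point_eval_norm_least)
    then have "A * point_eval_norm \<gamma> z \<le> max C 0" using A by (simp add: field_simps)
    then show ?thesis by (simp add: A_def mult_ac)
  qed simp
  then show ?thesis by blast
qed

lemma bounded_M_op_blochI:
  assumes hg: "g holomorphic_on ball 0 1" and c: "\<gamma> \<ge> 0"
    and C: "\<And>z. z \<in> ball 0 1 \<Longrightarrow> weight z powr \<beta> * point_eval_norm \<gamma> z * cmod (deriv g z) \<le> C"
  shows "bounded_op (bloch_type \<gamma>) (bloch_norm \<gamma>) (growth_space \<beta>) (growth_norm \<beta>) (M_op g)"
proof -
  have main: "weight z powr \<beta> * cmod (M_op g f z) \<le> C * bloch_norm \<gamma> f"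
    if f: "f \<in> bloch_type \<gamma>" and z: "z \<in> ball 0 1" for f z
  proof -
    have "weight z powr \<beta> * cmod (M_op g f z) = (weight z powr \<beta> * cmod (deriv g z)) * cmod (f z)"
      by (simp add: M_op_def norm_mult mult_ac)
    also have "\<dots> \<le> (weight z powr \<beta> * cmod (deriv g z)) * (point_eval_norm \<gamma> z * bloch_norm \<gamma> f)"
      using norm_le_point_eval_norm_mult[OF f z c] by (intro mult_left_mono) auto
    also have "\<dots> = (weight z powr \<beta> * point_eval_norm \<gamma> z * cmod (deriv g z)) * bloch_norm \<gamma> f"
      by (simp add: mult_ac)
    also have "\<dots> \<le> C * bloch_norm \<gamma> f" using C[OF z] bloch_norm_nonneg[OF f] by (intro mult_right_mono) auto
    finally show ?thesis .
  qed
  show ?thesis unfolding bounded_op_def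
    using growth_spaceI[OF holomorphic_M_op[OF bloch_type_holomorphic hg] main]
      growth_norm_least[OF main] by blast
qed

lemma bounded_M_op_bloch_iff:
  assumes "g holomorphic_on ball 0 1" and "\<gamma> \<ge> 0"
  shows "bounded_op (bloch_type \<gamma>) (bloch_norm \<gamma>) (growth_space \<beta>) (growth_norm \<beta>) (M_op g)
       \<longleftrightarrow> (\<exists>C. \<forall>z\<in>ball 0 1. weight z powr \<beta> * point_eval_norm \<gamma> z * cmod (deriv g z) \<le> C)"
  using bounded_M_op_blochD bounded_M_op_blochI assms by metis

lemma one_le_point_eval_norm: "z \<in> ball 0 1 \<Longrightarrow> c \<ge> 0 \<Longrightarrow>
    1 \<le> point_eval_norm c z"
proof -
  assume z: "z \<in> ball 0 1" and c: "c \<ge> 0"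
  have "bloch_norm c (\<lambda>_. 1) \<le> cmod 1 + 0" by (rule bloch_norm_least) simp
  then have "(\<lambda>_. 1) \<in> bloch_unit_ball c" by (auto intro!: bloch_typeI[where B=0])
  from norm_le_point_eval_norm[OF this z c] show ?thesis by simp
qed

lemma bloch_unit_ball_bounds:
  assumes f: "f \<in> bloch_unit_ball c"
  shows "\<And>u. u \<in> ball 0 1 \<Longrightarrow> weight u powr c * cmod (deriv f u) \<le> bloch_norm c f - cmod (f 0)"
    and "bloch_norm c f - cmod (f 0) \<le> 1 - cmod (f 0)" "cmod (f 0) \<le> 1"
    and "0 \<le> bloch_norm c f - cmod (f 0)" "bloch_norm c f - cmod (f 0) \<le> 1"
proof -
  have fb: "f \<in> bloch_type c" and n: "bloch_norm c f \<le> 1" using f by auto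
  show K: "\<And>u. u \<in> ball 0 1 \<Longrightarrow> weight u powr c * cmod (deriv f u) \<le> bloch_norm c f - cmod (f 0)"
    using bloch_norm_upper[OF fb] .
  show "bloch_norm c f - cmod (f 0) \<le> 1 - cmod (f 0)" using n by simp
  show "cmod (f 0) \<le> 1" using norm_0_le_bloch_norm[OF fb] n by linarith
  show "0 \<le> bloch_norm c f - cmod (f 0)" by (rule weighted_bound_nonneg[OF K])
  show "bloch_norm c f - cmod (f 0) \<le> 1" using n norm_ge_zero[of "f 0"] by linarith
qed

lemma point_eval_norm_le_lt1:
  assumes z: "z \<in> ball 0 1" and b: "0 < \<beta>" "\<beta> < 1"
  shows "point_eval_norm \<beta> z \<le> 1 + 1 / (1 - \<beta>)"
proof (rule point_eval_norm_least)
  fix f assume f: "f \<in> bloch_unit_ball \<beta>"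
  note K = bloch_unit_ball_bounds[OF f]
  have fh: "f holomorphic_on ball 0 1" using f by (auto intro: bloch_type_holomorphic)
  define k where "k = bloch_norm \<beta> f - cmod (f 0)"
  define r where "r = cmod z"
  have "cmod (f z - f 0) \<le> k * ((1 - r) powr (1 - \<beta>) - 1) / (\<beta> - 1)"
    unfolding k_def r_def by (rule norm_diff_le_powr_integral[OF fh z _ _ K(1)]) (use f b in auto)
  also have "\<dots> = k * (1 - (1 - r) powr (1 - \<beta>)) / (1 - \<beta>)"
  proof -
    have "\<beta> - 1 \<noteq> 0" "1 - \<beta> \<noteq> 0" using b by auto
    then show ?thesis by (simp add: field_simps)
  qed
  also have "\<dots> \<le> k * 1 / (1 - \<beta>)"
    using b K(4) by (intro divide_right_mono mult_left_mono) (auto simp: k_def)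
  also have "\<dots> \<le> 1 / (1 - \<beta>)" using b K(5) by (intro divide_right_mono) (auto simp: k_def)
  finally have "cmod (f z - f 0) \<le> 1 / (1 - \<beta>)" .
  then show "cmod (f z) \<le> 1 + 1 / (1 - \<beta>)" using norm_triangle_sub[of "f z" "f 0"] K(3) by linarith
qed

lemma point_eval_norm_le_ln:
  assumes z: "z \<in> ball 0 1"
  shows "point_eval_norm 1 z \<le> 1 + ln 2 + ln (1 / weight z)"
proof (rule point_eval_norm_least)
  fix f assume f: "f \<in> bloch_unit_ball 1"
  note K = bloch_unit_ball_bounds[OF f]
  have w: "0 < weight z" and r: "0 < 1 - cmod z" using weight_pos[OF z] z by auto
  have l0: "0 \<le> ln (1 / (1 - cmod z))" using z by simp
  have "cmod (f z - f 0) \<le> (bloch_norm 1 f - cmod (f 0)) * ln (1 / (1 - cmod z))"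
    using f by (intro norm_diff_le_ln_integral[OF _ z K(1)]) (auto intro: bloch_type_holomorphic)
  also have "\<dots> \<le> ln (1 / (1 - cmod z))" using K(4,5) l0 by (rule mult_left_le_one_le[rotated 1])
  also have "\<dots> \<le> ln (2 / weight z)"
    using weight_le_two_one_minus_norm[OF z] w r by (intro ln_mono) (auto simp: field_simps)
  also have "\<dots> = ln 2 + ln (1 / weight z)" using w by (simp add: ln_div)
  finally show "cmod (f z) \<le> 1 + ln 2 + ln (1 / weight z)"
    using norm_triangle_sub[of "f z" "f 0"] K(3) by linarith
qed

lemma point_eval_norm_le_gt1:
  assumes z: "z \<in> ball 0 1" and b: "1 < \<beta>"
  shows "point_eval_norm \<beta> z \<le> 1 + 2 powr (\<beta> - 1) / (\<beta> - 1) * weight z powr (1 - \<beta>)"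
proof (rule point_eval_norm_least)
  fix f assume f: "f \<in> bloch_unit_ball \<beta>"
  note K = bloch_unit_ball_bounds[OF f]
  define k where "k = bloch_norm \<beta> f - cmod (f 0)"
  define r where "r = cmod z"
  have w: "0 < weight z" using weight_pos[OF z] .
  have "cmod (f z - f 0) \<le> k * ((1 - r) powr (1 - \<beta>) - 1) / (\<beta> - 1)"
    unfolding k_def r_def using f b
    by (intro norm_diff_le_powr_integral[OF _ z _ _ K(1)]) (auto intro: bloch_type_holomorphic)
  also have "\<dots> \<le> k * (1 - r) powr (1 - \<beta>) / (\<beta> - 1)"
    using b K(4) by (intro divide_right_mono mult_left_mono) (auto simp: k_def)
  also have "\<dots> \<le> (1 - r) powr (1 - \<beta>) / (\<beta> - 1)"
    using b K(4,5) by (intro divide_right_mono mult_left_le_one_le) (auto simp: k_def)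
  also have "(1 - r) powr (1 - \<beta>) \<le> (weight z / 2) powr (1 - \<beta>)"
    using weight_le_two_one_minus_norm[OF z] b w by (intro powr_mono2') (auto simp: r_def)
  also have "\<dots> = weight z powr (1 - \<beta>) / 2 powr (1 - \<beta>)" by (rule powr_divide)
  also have "\<dots> = 2 powr (\<beta> - 1) * weight z powr (1 - \<beta>)"
    by (simp add: divide_inverse powr_minus[symmetric] mult.commute)
  finally have "cmod (f z - f 0) \<le> 2 powr (\<beta> - 1) / (\<beta> - 1) * weight z powr (1 - \<beta>)"
    using b by (simp add: divide_right_mono)
  then show "cmod (f z) \<le> 1 + 2 powr (\<beta> - 1) / (\<beta> - 1) * weight z powr (1 - \<beta>)"
    using norm_triangle_sub[of "f z" "f 0"] K(3) by linarith
qed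

lemma ln_le_point_eval_norm:
  assumes a: "a \<in> ball 0 1"
  shows "ln (1 / weight a) \<le> 2 * point_eval_norm 1 a"
proof -
  define f where "f = (\<lambda>w. - Ln (1 - cnj a * w))"
  have df: "(f has_field_derivative cnj a / (1 - cnj a * w)) (at w)" if w: "w \<in> ball 0 1" for w
  proof -
    have "((\<lambda>w. 1 - cnj a * w) has_field_derivative - cnj a) (at w)"
      by (auto intro!: derivative_eq_intros)
    from DERIV_chain2[OF has_field_derivative_Ln[OF kernel_denom_not_nonpos_real[OF a w]] this]
    have "((\<lambda>w. Ln (1 - cnj a * w)) has_field_derivative inverse (1 - cnj a * w) * - cnj a) (at w)" .
    then have "(f has_field_derivative - (inverse (1 - cnj a * w) * - cnj a)) (at w)"
      unfolding f_def by (rule DERIV_minus)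
    then show ?thesis by (simp add: divide_inverse mult.commute)
  qed
  have hf: "f holomorphic_on ball 0 1" using df holomorphic_on_open open_ball by blast
  have B: "weight w powr 1 * cmod (deriv f w) \<le> 2" if w: "w \<in> ball 0 1" for w
  proof -
    define D where "D = cmod (1 - cnj a * w)"
    have D: "0 < D" using kernel_denom_pos[OF a w] by (simp add: D_def)
    have "weight w powr 1 * cmod (deriv f w) = weight w * cmod a / D"
      using weight_pos[OF w] DERIV_imp_deriv[OF df[OF w]] by (simp add: norm_divide D_def)
    also have "\<dots> \<le> (2 * D) * 1 / D"
      using weight_le_kernel_denom(1)[OF a w] weight_pos[OF w] a D by (intro divide_right_mono mult_mono) (auto simp: D_def)
    also have "\<dots> = 2" using D by simp
    finally show ?thesis .
  qed
  have fb: "f \<in> bloch_type 1" by (rule bloch_typeI[OF hf B])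
  have "bloch_norm 1 f \<le> cmod (f 0) + 2" by (rule bloch_norm_least[OF B])
  then have n: "bloch_norm 1 f \<le> 2" by (simp add: f_def)
  have eq: "1 - cnj a * a = of_real (weight a)" using complex_norm_square[of a] by (simp add: mult.commute)
  have "f a = - Ln (of_real (weight a))" unfolding f_def by (simp only: eq)
  also have "Ln (of_real (weight a)) = of_real (ln (weight a))" by (rule Ln_of_real) (use weight_pos[OF a] in auto)
  finally have "f a = - of_real (ln (weight a))" .
  then have "ln (1 / weight a) = cmod (f a)" using weight_pos[OF a] by (simp add: ln_div)
  also have "\<dots> \<le> point_eval_norm 1 a * bloch_norm 1 f" by (rule norm_le_point_eval_norm_mult[OF fb a]) simp
  also have "\<dots> \<le> point_eval_norm 1 a * 2" using n point_eval_norm_nonneg[OF a] by (intro mult_left_mono) auto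
  finally show ?thesis by simp
qed

lemma weight_powr_le_point_eval_norm:
  assumes a: "a \<in> ball 0 1" and b: "1 < \<beta>"
  shows "weight a powr (1 - \<beta>) \<le> (1 + real (nat \<lceil>\<beta>\<rceil>) * 2 ^ (nat \<lceil>\<beta>\<rceil> + 1)) * point_eval_norm \<beta> a"
proof -
  define m where "m = nat \<lceil>\<beta>\<rceil>"
  have bm: "\<beta> \<le> real m" unfolding m_def by (rule real_nat_ceiling_ge)
  define f where "f = test_fun (\<beta> - 1) a m"
  have hf: "f holomorphic_on ball 0 1" unfolding f_def by (rule holomorphic_test_fun[OF a])
  have B: "weight w powr \<beta> * cmod (deriv f w) \<le> real m * 2 ^ (m + 1)" if "w \<in> ball 0 1" for w
    using weighted_deriv_test_fun_le[OF a that, of "\<beta> - 1" m] b bm by (simp add: f_def)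
  have fb: "f \<in> bloch_type \<beta>" by (rule bloch_typeI[OF hf B])
  have "cmod (f 0) = weight a powr (real m - (\<beta> - 1))" by (simp add: f_def test_fun_def)
  also have "\<dots> \<le> 1" using powr_mono2[of "real m - (\<beta> - 1)" "weight a" 1] weight_pos[OF a] bm by simp
  finally have n: "bloch_norm \<beta> f \<le> 1 + real m * 2 ^ (m + 1)" using bloch_norm_least[OF B] by linarith
  have "weight a powr (1 - \<beta>) = cmod (f a)" unfolding f_def test_fun_at_centre[OF a] by simp
  also have "\<dots> \<le> point_eval_norm \<beta> a * bloch_norm \<beta> f"
    using norm_le_point_eval_norm_mult[OF fb a] b by simp
  also have "\<dots> \<le> point_eval_norm \<beta> a * (1 + real m * 2 ^ (m + 1))"
    using n point_eval_norm_nonneg[OF a] b by (intro mult_left_mono) auto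
  finally show ?thesis by (simp add: m_def mult.commute)
qed

lemma deriv_bounded_on_cball:
  assumes hg: "g holomorphic_on ball 0 1" and r: "r < 1"
  shows "\<exists>M. \<forall>z. cmod z \<le> r \<longrightarrow> cmod (deriv g z) \<le> M"
proof -
  have "deriv g holomorphic_on ball 0 1" by (rule holomorphic_deriv[OF hg open_ball])
  moreover have "cball 0 r \<subseteq> ball (0::complex) 1" using r by auto
  ultimately have "continuous_on (cball 0 r) (deriv g)"
    using holomorphic_on_imp_continuous_on continuous_on_subset by blast
  then have "compact (deriv g ` cball 0 r)" by (rule compact_continuous_image) simp
  then obtain M where M: "\<forall>x\<in>deriv g ` cball 0 r. norm x \<le> M"
    using compact_imp_bounded[of "deriv g ` cball 0 r"] unfolding bounded_iff by blast
  show ?thesis by (rule exI[of _ M]) (use M in auto)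
qed

lemma log_bloch_subset_bloch: "log_bloch \<subseteq> bloch"
proof
  fix g assume "g \<in> log_bloch"
  then obtain C where hg: "g holomorphic_on ball 0 1"
    and C: "\<And>z. z \<in> ball 0 1 \<Longrightarrow> weight z * ln (1 / weight z) * cmod (deriv g z) \<le> C"
    unfolding log_bloch_def by blast
  obtain M where M: "\<And>z. cmod z \<le> 1 - exp (-1) / 2 \<Longrightarrow> cmod (deriv g z) \<le> M"
    using deriv_bounded_on_cball[OF hg, of "1 - exp (-1) / 2"] by auto
  have "weight z powr 1 * cmod (deriv g z) \<le> max C M" if z: "z \<in> ball 0 1" for z
  proof (cases "1 \<le> ln (1 / weight z)")
    case True
    have "weight z powr 1 * cmod (deriv g z) = weight z * 1 * cmod (deriv g z)"
      using weight_pos[OF z] by simp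
    also have "\<dots> \<le> weight z * ln (1 / weight z) * cmod (deriv g z)"
      using True weight_pos[OF z] by (intro mult_right_mono mult_left_mono) auto
    also have "\<dots> \<le> max C M" using C[OF z] by simp
    finally show ?thesis .
  next
    case False
    have w: "0 < weight z" using weight_pos[OF z] .
    have "1 / weight z < exp 1" using False w by (simp add: ln_less_cancel_iff[symmetric] ln_div)
    then have "exp (-1) < weight z" using w by (simp add: exp_minus field_simps)
    then have "cmod (deriv g z) \<le> M" using weight_le_two_one_minus_norm[OF z] by (intro M) simp
    moreover have "weight z powr 1 * cmod (deriv g z) \<le> cmod (deriv g z)"
      using w by (simp add: mult_left_le_one_le)
    ultimately show ?thesis by linarith
  qed
  then show "g \<in> bloch" unfolding bloch_def by (rule bloch_typeI[OF hg])
qed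

lemma weighted_bound_iff_comparable:
  fixes p q :: "complex \<Rightarrow> real" and F :: "complex \<Rightarrow> complex"
  assumes "\<And>z. z \<in> ball 0 1 \<Longrightarrow> q z \<le> A * p z" "\<And>z. z \<in> ball 0 1 \<Longrightarrow> p z \<le> B * q z"
    and "0 \<le> A" "0 \<le> B"
  shows "(\<exists>C. \<forall>z\<in>ball 0 1. p z * cmod (F z) \<le> C) \<longleftrightarrow> (\<exists>C. \<forall>z\<in>ball 0 1. q z * cmod (F z) \<le> C)"
proof -
  have transfer: "\<exists>C'. \<forall>z\<in>ball 0 1. v z * cmod (F z) \<le> C'"
    if vu: "\<And>z. z \<in> ball 0 1 \<Longrightarrow> v z \<le> K * u z" and K: "0 \<le> K"
      and C: "\<forall>z\<in>ball 0 1. u z * cmod (F z) \<le> C" for u v :: "complex \<Rightarrow> real" and K C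
  proof (intro exI ballI)
    fix z :: complex assume z: "z \<in> ball 0 1"
    have "v z * cmod (F z) \<le> K * u z * cmod (F z)" using vu[OF z] by (rule mult_right_mono) simp
    also have "\<dots> \<le> K * C" using C z K by (simp add: mult.assoc mult_left_mono)
    finally show "v z * cmod (F z) \<le> K * C" .
  qed
  show ?thesis using transfer[of q A p, OF assms(1,3)] transfer[of p B q, OF assms(2,4)] by blast
qed

lemma point_eval_cond_iff_bloch_type:
  assumes hg: "g holomorphic_on ball 0 1" and b: "0 < \<beta>" "\<beta> < 1"
  shows "(\<exists>C. \<forall>z\<in>ball 0 1. weight z powr \<beta> * point_eval_norm \<beta> z * cmod (deriv g z) \<le> C) \<longleftrightarrow> g \<in> bloch_type \<beta>"
proof -
  have "(\<exists>C. \<forall>z\<in>ball 0 1. weight z powr \<beta> * point_eval_norm \<beta> z * cmod (deriv g z) \<le> C)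
      \<longleftrightarrow> (\<exists>C. \<forall>z\<in>ball 0 1. weight z powr \<beta> * cmod (deriv g z) \<le> C)"
  proof (rule weighted_bound_iff_comparable[where A=1 and B="1 + 1 / (1 - \<beta>)"])
    fix z :: complex assume z: "z \<in> ball 0 1"
    have "weight z powr \<beta> * 1 \<le> weight z powr \<beta> * point_eval_norm \<beta> z"
      using one_le_point_eval_norm[OF z] b by (intro mult_left_mono) auto
    then show "weight z powr \<beta> \<le> 1 * (weight z powr \<beta> * point_eval_norm \<beta> z)" by simp
    show "weight z powr \<beta> * point_eval_norm \<beta> z \<le> (1 + 1 / (1 - \<beta>)) * weight z powr \<beta>"
      using mult_right_mono[OF point_eval_norm_le_lt1[OF z b], of "weight z powr \<beta>"] by (simp add: mult.commute)
  qed (use b in auto)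
  then show ?thesis using hg by (simp add: bloch_type_def)
qed

lemma point_eval_cond_iff_bloch:
  assumes hg: "g holomorphic_on ball 0 1" and b: "1 < \<beta>"
  shows "(\<exists>C. \<forall>z\<in>ball 0 1. weight z powr \<beta> * point_eval_norm \<beta> z * cmod (deriv g z) \<le> C) \<longleftrightarrow> g \<in> bloch"
proof -
  define N where "N = 1 + real (nat \<lceil>\<beta>\<rceil>) * 2 ^ (nat \<lceil>\<beta>\<rceil> + 1)"
  define K where "K = 2 powr (\<beta> - 1) / (\<beta> - 1)"
  have "(\<exists>C. \<forall>z\<in>ball 0 1. weight z powr \<beta> * point_eval_norm \<beta> z * cmod (deriv g z) \<le> C)
      \<longleftrightarrow> (\<exists>C. \<forall>z\<in>ball 0 1. weight z powr 1 * cmod (deriv g z) \<le> C)"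
  proof (rule weighted_bound_iff_comparable[where A=N and B="1 + K"])
    fix z :: complex assume z: "z \<in> ball 0 1"
    have w: "0 < weight z" "weight z \<le> 1" using weight_pos[OF z] by auto
    have "weight z powr 1 = weight z powr \<beta> * weight z powr (1 - \<beta>)" by (simp add: powr_add[symmetric])
    also have "\<dots> \<le> weight z powr \<beta> * (N * point_eval_norm \<beta> z)"
      using weight_powr_le_point_eval_norm[OF z b] by (simp add: N_def mult_left_mono)
    finally show "weight z powr 1 \<le> N * (weight z powr \<beta> * point_eval_norm \<beta> z)" by (simp add: mult_ac)
    have "weight z powr \<beta> * point_eval_norm \<beta> z \<le> weight z powr \<beta> * (1 + K * weight z powr (1 - \<beta>))"
      using point_eval_norm_le_gt1[OF z b] by (simp add: K_def mult_left_mono)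
    also have "\<dots> = weight z powr \<beta> + K * (weight z powr \<beta> * weight z powr (1 - \<beta>))"
      by (simp add: algebra_simps)
    also have "weight z powr \<beta> * weight z powr (1 - \<beta>) = weight z powr 1" by (simp add: powr_add[symmetric])
    also have "weight z powr \<beta> \<le> weight z powr 1" using w b by (intro powr_mono') auto
    finally show "weight z powr \<beta> * point_eval_norm \<beta> z \<le> (1 + K) * weight z powr 1"
      by (simp add: distrib_right)
  qed (use b in \<open>auto simp: N_def K_def\<close>)
  then show ?thesis using hg by (simp add: bloch_def bloch_type_def)
qed

lemma point_eval_cond_iff_log_bloch:
  assumes hg: "g holomorphic_on ball 0 1"
  shows "(\<exists>C. \<forall>z\<in>ball 0 1. weight z powr 1 * point_eval_norm 1 z * cmod (deriv g z) \<le> C) \<longleftrightarrow> g \<in> log_bloch"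
proof -
  have "(\<exists>C. \<forall>z\<in>ball 0 1. weight z powr 1 * point_eval_norm 1 z * cmod (deriv g z) \<le> C)
      \<longleftrightarrow> (\<exists>C. \<forall>z\<in>ball 0 1. weight z * (1 + ln (1 / weight z)) * cmod (deriv g z) \<le> C)"
  proof (rule weighted_bound_iff_comparable[where A=3 and B="1 + ln 2"])
    fix z :: complex assume z: "z \<in> ball 0 1"
    have w: "0 < weight z" and L: "0 \<le> ln (1 / weight z)" using weight_pos[OF z] by auto
    have "1 + ln (1 / weight z) \<le> 3 * point_eval_norm 1 z"
      using one_le_point_eval_norm[OF z zero_le_one] ln_le_point_eval_norm[OF z] by linarith
    then show "weight z * (1 + ln (1 / weight z)) \<le> 3 * (weight z powr 1 * point_eval_norm 1 z)"
      using w by (simp add: mult_left_mono mult.left_commute)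
    have "0 \<le> ln 2 * ln (1 / weight z)" using L by simp
    then have "point_eval_norm 1 z \<le> (1 + ln 2) * (1 + ln (1 / weight z))"
      using point_eval_norm_le_ln[OF z] by (simp add: algebra_simps)
    then show "weight z powr 1 * point_eval_norm 1 z \<le> (1 + ln 2) * (weight z * (1 + ln (1 / weight z)))"
      using w by (simp add: mult_left_mono mult.left_commute)
  qed auto
  also have "\<dots> \<longleftrightarrow> g \<in> log_bloch"
  proof
    assume "\<exists>C. \<forall>z\<in>ball 0 1. weight z * (1 + ln (1 / weight z)) * cmod (deriv g z) \<le> C"
    then obtain C where C: "\<And>z. z \<in> ball 0 1 \<Longrightarrow> weight z * (1 + ln (1 / weight z)) * cmod (deriv g z) \<le> C"
      by blast
    have "weight z * ln (1 / weight z) * cmod (deriv g z) \<le> C" if z: "z \<in> ball 0 1" for z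
    proof -
      have "0 \<le> weight z * cmod (deriv g z)" using weight_pos[OF z] by simp
      then show ?thesis using C[OF z] by (simp add: algebra_simps)
    qed
    then show "g \<in> log_bloch" unfolding log_bloch_def using hg by blast
  next
    assume g: "g \<in> log_bloch"
    then obtain M where M: "\<And>z. z \<in> ball 0 1 \<Longrightarrow> weight z powr 1 * cmod (deriv g z) \<le> M"
      using log_bloch_subset_bloch unfolding bloch_def bloch_type_def by blast
    obtain C where C: "\<And>z. z \<in> ball 0 1 \<Longrightarrow> weight z * ln (1 / weight z) * cmod (deriv g z) \<le> C"
      using g unfolding log_bloch_def by blast
    have "weight z * (1 + ln (1 / weight z)) * cmod (deriv g z) \<le> M + C" if z: "z \<in> ball 0 1" for z
      using M[OF z] C[OF z] weight_pos[OF z] by (simp add: algebra_simps)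
    then show "\<exists>C. \<forall>z\<in>ball 0 1. weight z * (1 + ln (1 / weight z)) * cmod (deriv g z) \<le> C" by blast
  qed
  finally show ?thesis .
qed

lemma point_eval_cond_iff:
  assumes hg: "g holomorphic_on ball 0 1" and b: "\<beta> > 0"
  shows "(\<exists>C. \<forall>z\<in>ball 0 1. weight z powr \<beta> * point_eval_norm \<beta> z * cmod (deriv g z) \<le> C)
    \<longleftrightarrow> (if \<beta> < 1 then g \<in> bloch_type \<beta> else if \<beta> = 1 then g \<in> log_bloch else g \<in> bloch)"
proof -
  consider "\<beta> < 1" | "\<beta> = 1" | "\<beta> > 1" by linarith
  then show ?thesis
    by cases (use point_eval_cond_iff_bloch_type[OF hg b] point_eval_cond_iff_log_bloch[OF hg]
        point_eval_cond_iff_bloch[OF hg] in auto)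
qed

theorem corollary2p3:
  fixes g :: "complex \<Rightarrow> complex" and \<beta> \<gamma> :: real
  assumes hg: "g holomorphic_on ball 0 1" and b: "\<beta> > 0" and c: "\<gamma> > 0"
  shows
   "(bounded_op (growth_space \<gamma>) (growth_norm \<gamma>) (growth_space \<beta>) (growth_norm \<beta>) (C_op g)
       \<longleftrightarrow> bounded_op (growth_space \<gamma>) (growth_norm \<gamma>) (growth_space \<beta>) (growth_norm \<beta>) (T_op g))
  \<and> (bounded_op (growth_space \<gamma>) (growth_norm \<gamma>) (growth_space \<beta>) (growth_norm \<beta>) (T_op g)
       \<longleftrightarrow> bounded_op (growth_space \<gamma>) (growth_norm \<gamma>) (growth_space (\<beta>+1)) (growth_norm (\<beta>+1)) (M_op g))
  \<and> (bounded_op (growth_space \<gamma>) (growth_norm \<gamma>) (growth_space (\<beta>+1)) (growth_norm (\<beta>+1)) (M_op g)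
       \<longleftrightarrow> (\<exists>C. \<forall>z\<in>ball 0 1. (1 - (cmod z)^2) powr (\<beta> + 1 - \<gamma>) * cmod (deriv g z) \<le> C))
  \<and> (\<gamma> = \<beta> \<longrightarrow>
       ((\<exists>C. \<forall>z\<in>ball 0 1. (1 - (cmod z)^2) powr (\<beta> + 1 - \<gamma>) * cmod (deriv g z) \<le> C)
         \<longleftrightarrow> g \<in> bloch))
  \<and> (bounded_op (bloch_type \<gamma>) (bloch_norm \<gamma>) (bloch_type \<beta>) (bloch_norm \<beta>) (C_op g)
       \<longleftrightarrow> bounded_op (bloch_type \<gamma>) (bloch_norm \<gamma>) (bloch_type \<beta>) (bloch_norm \<beta>) (T_op g))
  \<and> (bounded_op (bloch_type \<gamma>) (bloch_norm \<gamma>) (bloch_type \<beta>) (bloch_norm \<beta>) (T_op g)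
       \<longleftrightarrow> bounded_op (bloch_type \<gamma>) (bloch_norm \<gamma>) (growth_space \<beta>) (growth_norm \<beta>) (M_op g))
  \<and> (bounded_op (bloch_type \<gamma>) (bloch_norm \<gamma>) (growth_space \<beta>) (growth_norm \<beta>) (M_op g)
       \<longleftrightarrow> (\<exists>C. \<forall>z\<in>ball 0 1. (1 - (cmod z)^2) powr \<beta> * point_eval_norm \<gamma> z * cmod (deriv g z) \<le> C))
  \<and> (\<gamma> = \<beta> \<longrightarrow>
       ((\<exists>C. \<forall>z\<in>ball 0 1. (1 - (cmod z)^2) powr \<beta> * point_eval_norm \<gamma> z * cmod (deriv g z) \<le> C)
         \<longleftrightarrow> (if \<beta> < 1 then g \<in> bloch_type \<beta> else if \<beta> = 1 then g \<in> log_bloch else g \<in> bloch)))"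
proof -
  have hol: "\<And>f. f \<in> growth_space \<gamma> \<Longrightarrow> f holomorphic_on ball 0 1"
    "\<And>f. f \<in> bloch_type \<gamma> \<Longrightarrow> f holomorphic_on ball 0 1"
    by (simp_all add: growth_space_holomorphic bloch_type_holomorphic)
  have "\<gamma> = \<beta> \<longrightarrow> ((\<exists>C. \<forall>z\<in>ball 0 1. weight z powr (\<beta> + 1 - \<gamma>) * cmod (deriv g z) \<le> C) \<longleftrightarrow> g \<in> bloch)"
    using hg by (simp add: bloch_def bloch_type_def)
  then show ?thesis
    using bounded_C_op_iff_T_op_growth[OF hol(1) hg b] bounded_T_op_iff_M_op_growth[OF hol(1) hg b]
      bounded_M_op_growth_iff[OF hg less_imp_le[OF c]] bounded_C_op_iff_T_op_bloch[OF hol(2) hg b]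
      bounded_T_op_iff_M_op_bloch[OF hol(2) hg] bounded_M_op_bloch_iff[OF hg less_imp_le[OF c]]
      point_eval_cond_iff[OF hg b]
    by (intro conjI impI) auto
qed

end
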